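(* Let $K$ be a non-archimedean local field with $\mathrm{char}(K)=0$, and let $G$ be a discrete subgroup of $\mathrm{PSL}_2(K)$ with no $2$-torsion. If $g,h\in G$ are elliptic, then either $F(g)\cap F(h)=\varnothing$, or $\mathrm{Fix}(g)\subseteq\mathrm{Fix}(h)$, or $\mathrm{Fix}(h)\subseteq\mathrm{Fix}(g)$.
   Context: $\mathrm{PSL}_2(K)$ acts by isometries on its Bruhat--Tits tree $T_K$; an element is elliptic if it fixes a vertex of $T_K$, and $\mathrm{Fix}(g)$ is its fixed point set in $T_K$. For elliptic $g$, $F(g)=\bigcup\{\mathrm{Fix}(g^i): i\in\mathbb{Z},\ g^i\neq 1\}$. *)

theory Defs
  imports Main
begin

text \<open>The field K is a type of class field_char_0 (characteristic 0); v is a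
normalized discrete valuation, meaningful only on nonzero elements.\<close>

definition vint :: "('a::field \<Rightarrow> int) \<Rightarrow> 'a \<Rightarrow> bool" where
  "vint v x \<longleftrightarrow> x = 0 \<or> v x \<ge> 0"

definition vsmall :: "('a::field \<Rightarrow> int) \<Rightarrow> int \<Rightarrow> 'a \<Rightarrow> bool" where
  "vsmall v N x \<longleftrightarrow> x = 0 \<or> v x \<ge> N"

definition nonarch_local_field :: "('a::field_char_0 \<Rightarrow> int) \<Rightarrow> bool" where
  "nonarch_local_field v \<longleftrightarrow>
     (\<forall>x y. x \<noteq> 0 \<longrightarrow> y \<noteq> 0 \<longrightarrow> v (x * y) = v x + v y)
   \<and> (\<forall>x y. x \<noteq> 0 \<longrightarrow> y \<noteq> 0 \<longrightarrow> x + y \<noteq> 0 \<longrightarrow> v (x + y) \<ge> min (v x) (v y))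
   \<and> (\<exists>\<pi>. \<pi> \<noteq> 0 \<and> v \<pi> = 1)
   \<and> (\<exists>S. finite S \<and> (\<forall>x. vint v x \<longrightarrow> (\<exists>s\<in>S. vsmall v 1 (x - s))))
   \<and> (\<forall>f :: nat \<Rightarrow> 'a. (\<forall>N. \<exists>M. \<forall>m\<ge>M. \<forall>n\<ge>M. vsmall v N (f m - f n))
         \<longrightarrow> (\<exists>L. \<forall>N. \<exists>M. \<forall>n\<ge>M. vsmall v N (f n - L)))"

type_synonym 'a mat2 = "'a \<times> 'a \<times> 'a \<times> 'a"  (* (a,b,c,d) = [[a,b],[c,d]] *)
type_synonym 'a psl2 = "'a mat2 set"            (* class {A, -A} *)

definition sl2 :: "'a::field mat2 set" where
  "sl2 = {(a,b,c,d). a * d - b * c = 1}"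

definition mneg :: "'a::field mat2 \<Rightarrow> 'a mat2" where
  "mneg = (\<lambda>(a,b,c,d). (-a,-b,-c,-d))"

definition mmul :: "'a::field mat2 \<Rightarrow> 'a mat2 \<Rightarrow> 'a mat2" where
  "mmul = (\<lambda>(a,b,c,d) (e,f,g,h). (a*e+b*g, a*f+b*h, c*e+d*g, c*f+d*h))"

definition minv :: "'a::field mat2 \<Rightarrow> 'a mat2" where
  "minv = (\<lambda>(a,b,c,d). (d,-b,-c,a))"

definition mid :: "'a::field mat2" where
  "mid = (1,0,0,1)"

definition pcls :: "'a::field mat2 \<Rightarrow> 'a psl2" where
  "pcls A = {A, mneg A}"

definition PSL2 :: "'a::field psl2 set" where
  "PSL2 = pcls ` sl2"

definition pone :: "'a::field psl2" where
  "pone = pcls mid"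

definition pmul :: "'a::field psl2 \<Rightarrow> 'a psl2 \<Rightarrow> 'a psl2" where
  "pmul X Y = {mmul A B | A B. A \<in> X \<and> B \<in> Y}"

definition pinv :: "'a::field psl2 \<Rightarrow> 'a psl2" where
  "pinv X = minv ` X"

primrec ppow :: "'a::field psl2 \<Rightarrow> nat \<Rightarrow> 'a psl2" where
  "ppow X 0 = pone"
| "ppow X (Suc n) = pmul X (ppow X n)"

definition pzpow :: "'a::field psl2 \<Rightarrow> int \<Rightarrow> 'a psl2" where
  "pzpow X i = (if i \<ge> 0 then ppow X (nat i) else ppow (pinv X) (nat (- i)))"

definition subgroup_PSL2 :: "'a::field psl2 set \<Rightarrow> bool" where
  "subgroup_PSL2 G \<longleftrightarrow> G \<subseteq> PSL2 \<and> pone \<in> G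
     \<and> (\<forall>X\<in>G. \<forall>Y\<in>G. pmul X Y \<in> G) \<and> (\<forall>X\<in>G. pinv X \<in> G)"

definition near_id :: "('a::field \<Rightarrow> int) \<Rightarrow> int \<Rightarrow> 'a mat2 \<Rightarrow> bool" where
  "near_id v N = (\<lambda>(a,b,c,d). vsmall v N (a - 1) \<and> vsmall v N b \<and> vsmall v N c
                             \<and> vsmall v N (d - 1))"

definition discrete_subgroup :: "('a::field \<Rightarrow> int) \<Rightarrow> 'a psl2 set \<Rightarrow> bool" where
  "discrete_subgroup v G \<longleftrightarrow> subgroup_PSL2 G \<and>
     (\<exists>N. \<forall>X\<in>G. (\<exists>A\<in>X. near_id v N A) \<longrightarrow> X = pone)"

definition no_2_torsion :: "'a::field psl2 set \<Rightarrow> bool" where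
  "no_2_torsion G \<longleftrightarrow> (\<forall>X\<in>G. pmul X X = pone \<longrightarrow> X = pone)"

definition lattice_of :: "('a::field \<Rightarrow> int) \<Rightarrow> 'a \<times> 'a \<Rightarrow> 'a \<times> 'a \<Rightarrow> ('a \<times> 'a) set" where
  "lattice_of v e1 e2 = {(a * fst e1 + b * fst e2, a * snd e1 + b * snd e2) | a b.
                           vint v a \<and> vint v b}"

definition is_lattice :: "('a::field \<Rightarrow> int) \<Rightarrow> ('a \<times> 'a) set \<Rightarrow> bool" where
  "is_lattice v L \<longleftrightarrow> (\<exists>e1 e2. fst e1 * snd e2 - snd e1 * fst e2 \<noteq> 0 \<and> L = lattice_of v e1 e2)"

definition hclass :: "('a::field \<times> 'a) set \<Rightarrow> ('a \<times> 'a) set set" where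
  "hclass L = {(\<lambda>(x,y). (c * x, c * y)) ` L | c. c \<noteq> 0}"

definition BT_vertices :: "('a::field \<Rightarrow> int) \<Rightarrow> ('a \<times> 'a) set set set" where
  "BT_vertices v = {hclass L | L. is_lattice v L}"

definition mat_act :: "'a::field mat2 \<Rightarrow> 'a \<times> 'a \<Rightarrow> 'a \<times> 'a" where
  "mat_act = (\<lambda>(a,b,c,d) (x,y). (a * x + b * y, c * x + d * y))"

definition vert_act :: "'a::field mat2 \<Rightarrow> ('a \<times> 'a) set set \<Rightarrow> ('a \<times> 'a) set set" where
  "vert_act A X = (\<lambda>L. mat_act A ` L) ` X"

text \<open>Fixed vertices of g (PSL_2 acts on T_K without inversions, so the fixed
subtree is determined by its vertex set).\<close>

definition Fix :: "('a::field \<Rightarrow> int) \<Rightarrow> 'a psl2 \<Rightarrow> ('a \<times> 'a) set set set" where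
  "Fix v g = {X \<in> BT_vertices v. \<forall>A\<in>g. vert_act A X = X}"

definition elliptic :: "('a::field \<Rightarrow> int) \<Rightarrow> 'a psl2 \<Rightarrow> bool" where
  "elliptic v g \<longleftrightarrow> Fix v g \<noteq> {}"

definition Fall :: "('a::field \<Rightarrow> int) \<Rightarrow> 'a psl2 \<Rightarrow> ('a \<times> 'a) set set set" where
  "Fall v g = \<Union>{Fix v (pzpow g i) | i. pzpow g i \<noteq> pone}"

end

theory Submission
  imports Defs "HOL-Algebra.Group"
begin

section \<open>Two-by-two matrices\<close>

definition mdet :: "'a::field mat2 \<Rightarrow> 'a" where
  "mdet = (\<lambda>(a,b,c,d). a*d - b*c)"

definition mtr :: "'a::field mat2 \<Rightarrow> 'a" where
  "mtr = (\<lambda>(a,b,c,d). a + d)"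

definition smat :: "'a::field \<Rightarrow> 'a mat2" where
  "smat k = (k,0,0,k)"

definition mlin :: "'a::field \<Rightarrow> 'a \<Rightarrow> 'a mat2 \<Rightarrow> 'a mat2" where
  "mlin x y = (\<lambda>(a,b,c,d). (x + y*a, y*b, y*c, x + y*d))"

definition in_span :: "'a::field mat2 \<Rightarrow> 'a mat2 \<Rightarrow> bool" where
  "in_span A M \<longleftrightarrow> (\<exists>x y. M = mlin x y A)"

definition nonscalar :: "'a::field mat2 \<Rightarrow> bool" where
  "nonscalar A \<longleftrightarrow> (\<forall>k. A \<noteq> smat k)"

primrec mpow :: "'a::field mat2 \<Rightarrow> nat \<Rightarrow> 'a mat2" where
  "mpow A 0 = mid"
| "mpow A (Suc n) = mmul A (mpow A n)"

definition mzpow :: "'a::field mat2 \<Rightarrow> int \<Rightarrow> 'a mat2" where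
  "mzpow A i = (if i \<ge> 0 then mpow A (nat i) else mpow (minv A) (nat (- i)))"

lemmas mat_defs = mdet_def mtr_def smat_def mlin_def mmul_def minv_def mid_def mneg_def

lemma mmul_assoc: "mmul (mmul A B) C = mmul A (mmul B C)"
  by (cases A; cases B; cases C) (simp add: mat_defs algebra_simps)

lemma mmul_mid [simp]: "mmul mid A = A" "mmul A mid = A"
  by (cases A; simp add: mat_defs)+

lemma mdet_mmul: "mdet (mmul A B) = mdet A * mdet B"
  by (cases A; cases B) (simp add: mat_defs algebra_simps)

lemma mdet_mid [simp]: "mdet mid = 1"
  by (simp add: mat_defs)

lemma mdet_minv [simp]: "mdet (minv A) = mdet A"
  by (cases A) (simp add: mat_defs algebra_simps)

lemma mdet_mneg [simp]: "mdet (mneg A) = mdet A"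
  by (cases A) (simp add: mat_defs algebra_simps)

lemma mneg_mneg [simp]: "mneg (mneg A) = A"
  by (cases A) (simp add: mat_defs)

lemma minv_minv [simp]: "minv (minv A) = A"
  by (cases A) (simp add: mat_defs)

lemma minv_left: "mdet A = 1 \<Longrightarrow> mmul (minv A) A = mid"
  by (cases A) (simp add: mat_defs algebra_simps)

lemma minv_right: "mdet A = 1 \<Longrightarrow> mmul A (minv A) = mid"
  by (cases A) (simp add: mat_defs algebra_simps)

lemma mmul_mneg: "mmul (mneg A) B = mneg (mmul A B)" "mmul A (mneg B) = mneg (mmul A B)"
  by (cases A; cases B; simp add: mat_defs algebra_simps)+

lemma minv_mneg: "minv (mneg A) = mneg (minv A)"
  by (cases A) (simp add: mat_defs)

lemma mneg_eq_mlin: "mneg A = mlin 0 (-1) A"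
  by (cases A) (simp add: mat_defs)

lemma smat_commute: "mmul (smat c) A = mmul A (smat c)"
  by (cases A) (simp add: mat_defs)

lemma mdet_mlin: "mdet (mlin x y A) = x*x + x*y*mtr A + y*y*mdet A"
  by (cases A) (simp add: mat_defs algebra_simps)

lemma mtr_mlin: "mtr (mlin x y A) = 2*x + y*mtr A"
  by (cases A) (simp add: mat_defs algebra_simps)

lemma mtr_mmul_commute: "mtr (mmul P Q) = mtr (mmul Q P)"
  by (cases P; cases Q) (simp add: mat_defs algebra_simps)

lemma mtr_conj: "mdet Y = 1 \<Longrightarrow> mtr (mmul (minv Y) (mmul X Y)) = mtr X"
  by (metis minv_right mmul_assoc mmul_mid(2) mtr_mmul_commute)

lemma mpow_mdet: "mdet A = 1 \<Longrightarrow> mdet (mpow A n) = 1"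
  by (induction n) (auto simp: mdet_mmul)

lemma mzpow_mdet: "mdet A = 1 \<Longrightarrow> mdet (mzpow A i) = 1"
  by (simp add: mzpow_def mpow_mdet)

lemma mpow_commute: "mmul (mpow A n) A = mmul A (mpow A n)"
  by (induction n) (simp_all add: mmul_assoc)

lemma nonscalar_iff: "nonscalar (a,b,c,d) \<longleftrightarrow> b \<noteq> 0 \<or> c \<noteq> 0 \<or> a \<noteq> d"
  by (auto simp: nonscalar_def smat_def)

lemma nonscalar_sl2:
  assumes "mdet A = 1" "A \<noteq> mid" "A \<noteq> mneg mid"
  shows "nonscalar A"
proof -
  have "k = 1 \<or> k = -1" if "A = smat k" for k
    using assms that by (simp add: mat_defs) (metis square_eq_1_iff)
  then show ?thesis
    using assms by (auto simp: nonscalar_def mat_defs)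
qed

lemma mmul_self_trace_zero:
  assumes "mdet A = 1" "mtr A = 0"
  shows "mmul A A = mneg mid"
proof (cases A)
  case (fields a b c d)
  from assms have "a*d - b*c = 1" "a + d = 0"
    by (simp_all add: fields mdet_def mtr_def)
  then show ?thesis
    by (simp add: fields mat_defs) (intro conjI; algebra)
qed

lemma anticommute_trace_zero:
  assumes "mdet Y = 1" "mmul X Y = mneg (mmul Y X)"
  shows "mtr (X::'a::field_char_0 mat2) = 0"
proof -
  have "mmul (minv Y) (mmul X Y) = mneg X"
    using assms by (simp add: mmul_mneg minv_left flip: mmul_assoc)
  then have "mtr X = - mtr X"
    using mtr_conj[OF assms(1), of X] by (cases X) (simp add: mat_defs)
  then show ?thesis by simp
qed

lemma in_span_self: "in_span A A"
  unfolding in_span_def by (rule exI[of _ 0], rule exI[of _ 1], cases A, simp add: mat_defs)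

lemma in_span_mid: "in_span A mid"
  unfolding in_span_def by (rule exI[of _ 1], rule exI[of _ 0], cases A, simp add: mat_defs)

lemma in_span_minv: "in_span A (minv A)"
  unfolding in_span_def by (rule exI[of _ "mtr A"], rule exI[of _ "-1"], cases A, simp add: mat_defs)

lemma in_span_mmul:
  assumes "in_span A M" "in_span A N"
  shows "in_span A (mmul M N)"
proof -
  obtain x y x' y' where "M = mlin x y A" "N = mlin x' y' A"
    using assms by (auto simp: in_span_def)
  then have "mmul M N = mlin (x*x' - y*y'*mdet A) (x*y' + y*x' + y*y'*mtr A) A"
    by (cases A) (simp add: mat_defs algebra_simps)
  then show ?thesis by (auto simp: in_span_def)
qed

lemma in_span_trans: "in_span A M \<Longrightarrow> in_span M N \<Longrightarrow> in_span A N"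
proof -
  assume "in_span A M" "in_span M N"
  then obtain x y x' y' where "M = mlin x y A" "N = mlin x' y' M"
    by (auto simp: in_span_def)
  then have "N = mlin (x' + y'*x) (y'*y) A"
    by (cases A) (simp add: mat_defs algebra_simps)
  then show "in_span A N" by (auto simp: in_span_def)
qed

lemma in_span_mpow: "in_span A (mpow A n)"
  by (induction n) (auto simp: in_span_mid in_span_mmul in_span_self)

lemma in_span_mzpow: "in_span A (mzpow A i)"
  using in_span_mpow in_span_minv in_span_trans by (metis mzpow_def)

lemma in_span_commute: "in_span A M \<Longrightarrow> in_span A N \<Longrightarrow> mmul M N = mmul N M"
  unfolding in_span_def by (cases A) (auto simp: mat_defs algebra_simps)

lemma proportional_if_minors_vanish:
  fixes t1 :: "'a::field"
  assumes "t1 \<noteq> 0" "u1*t2 = u2*t1" "u1*t3 = u3*t1"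
  shows "\<exists>y. u1 = y*t1 \<and> u2 = y*t2 \<and> u3 = y*t3"
  using assms by (intro exI[of _ "u1/t1"]) (auto simp: field_simps)

lemma commute_in_span:
  assumes "nonscalar A" "mmul A M = mmul M A"
  shows "in_span A M"
proof -
  obtain a b c d where A: "A = (a,b,c,d)" by (cases A)
  obtain p q r s where M: "M = (p,q,r,s)" by (cases M)
  have "a*p + b*r = p*a + q*c" "a*q + b*s = p*b + q*d" "c*p + d*r = r*a + s*c"
    using assms(2) by (simp_all add: A M mmul_def)
  then have minors: "q*c = r*b" "q*(a-d) = (p-s)*b" "r*(a-d) = (p-s)*c"
    by algebra+
  have "b \<noteq> 0 \<or> c \<noteq> 0 \<or> a - d \<noteq> 0"
    using assms(1) by (simp add: A nonscalar_iff)
  then have "\<exists>y. q = y*b \<and> r = y*c \<and> p - s = y*(a-d)"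
  proof (elim disjE)
    assume "b \<noteq> 0"
    from proportional_if_minors_vanish[OF this minors(1,2)] show ?thesis by blast
  next
    assume "c \<noteq> 0"
    from proportional_if_minors_vanish[OF this minors(1)[symmetric] minors(3)] show ?thesis by blast
  next
    assume "a - d \<noteq> 0"
    from proportional_if_minors_vanish[OF this minors(2,3)[symmetric]] show ?thesis by blast
  qed
  then obtain y where "q = y*b" "r = y*c" "p - s = y*(a-d)" by blast
  then have "M = mlin (p - y*a) y A"
    by (simp add: A M mlin_def algebra_simps)
  then show ?thesis by (auto simp: in_span_def)
qed

lemma in_span_swap: "nonscalar M \<Longrightarrow> in_span A M \<Longrightarrow> in_span M A"
  by (metis commute_in_span in_span_commute in_span_self)

lemma in_span_of_commuting_powers:
  assumes "nonscalar (mzpow A i)" "nonscalar (mzpow B j)"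
    and "mmul (mzpow A i) (mzpow B j) = mmul (mzpow B j) (mzpow A i)"
  shows "in_span A B"
  using assms by (meson commute_in_span in_span_mzpow in_span_swap in_span_trans)

lemma mlin_eq_smat_imp_scalar: "mlin x y A = smat k \<Longrightarrow> y \<noteq> 0 \<Longrightarrow> \<not> nonscalar A"
  by (cases A) (auto simp: mat_defs nonscalar_iff)

lemma mmul_mlin: "mmul A (mlin x y A) = mlin (- y * mdet A) (x + y * mtr A) A"
  by (cases A) (simp add: mat_defs algebra_simps)

text \<open>Cayley--Hamilton for a matrix with the double eigenvalue \<open>e\<close>.\<close>

lemma mpow_trace_pm2:
  assumes "mdet A = 1" "mtr A = 2*e" "e*e = 1"
  shows "mpow A n = mlin ((1 - of_nat n) * e^n) (of_nat n * e^(n+1)) A"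
proof (induction n)
  case 0
  show ?case by (cases A) (simp add: mat_defs)
next
  case (Suc n)
  have ee: "e * (e * z) = z" for z
    using assms(3) by (metis mult.assoc mult_1)
  have "(1 - of_nat n) * e^n + of_nat n * e^(n+1) * mtr A = of_nat (Suc n) * e^(Suc n + 1)"
    using assms(2) by (simp add: algebra_simps ee)
  moreover have "- (of_nat n * e^(n+1)) = (1 - of_nat (Suc n)) * e^(Suc n)"
    by (simp add: algebra_simps)
  ultimately show ?case
    using Suc by (simp add: mmul_mlin assms(1))
qed

text \<open>A non-scalar matrix of trace \<open>\<plusminus>2\<close> is \<open>\<plusminus>\<close> a nontrivial unipotent, so in
  characteristic 0 none of its powers is scalar.\<close>

lemma torsion_nonscalar_trace_sq_ne_4:
  assumes "nonscalar A" "mdet A = (1::'a::field_char_0)" "n \<ge> 1"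
    and "mpow A n = mid \<or> mpow A n = mneg mid"
  shows "mtr A * mtr A \<noteq> 4"
proof
  assume t: "mtr A * mtr A = 4"
  define e where "e = mtr A / 2"
  have "mtr A = 2*e" "e*e = 1" using t by (simp_all add: e_def field_simps)
  then have "mpow A n = mlin ((1 - of_nat n) * e^n) (of_nat n * e^(n+1)) A"
    using mpow_trace_pm2 assms(2) by blast
  moreover have "of_nat n * e^(n+1) \<noteq> 0"
    using \<open>e*e = 1\<close> assms(3) by auto
  moreover have "\<exists>k. mpow A n = smat k"
    using assms(4) by (auto simp: mat_defs)
  ultimately show False
    using assms(1) mlin_eq_smat_imp_scalar by metis
qed

lemma mlin_trace_eq_minv: "mlin (mtr A) (-1) A = minv A"
  by (cases A) (simp add: mat_defs)

lemma inverting_trace_zero: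
  assumes "nonscalar X" "mmul H X = mmul (minv X) H"
  shows "mtr H = 0"
proof -
  obtain a b c d where X: "X = (a,b,c,d)" by (cases X)
  obtain p q r s where H: "H = (p,q,r,s)" by (cases H)
  have "(p+s)*b = 0" "(p+s)*c = 0" "(p+s)*(a-d) = 0"
    using assms(2) by (simp_all add: X H mat_defs) algebra+
  moreover have "b \<noteq> 0 \<or> c \<noteq> 0 \<or> a - d \<noteq> 0"
    using assms(1) by (simp add: X nonscalar_iff)
  ultimately show ?thesis by (auto simp: H mtr_def)
qed

text \<open>\<open>H X H\<^sup>-\<^sup>1\<close> lies in the span of \<open>I\<close> and \<open>X\<close> and has the trace and determinant
  of \<open>X\<close>, so it is \<open>X\<close> or \<open>X\<^sup>-\<^sup>1\<close> unless \<open>tr X = \<plusminus>2\<close>.\<close>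

lemma conj_commute_imp_commute_or_trace_zero:
  fixes X H :: "'a::field_char_0 mat2"
  assumes "nonscalar X" "mdet X = 1" "mdet H = 1" "mtr X * mtr X \<noteq> 4"
    and "mmul (mmul H (mmul X (minv H))) X = mmul X (mmul H (mmul X (minv H)))"
  shows "mmul H X = mmul X H \<or> mtr H = 0"
proof -
  define Y where "Y = mmul H (mmul X (minv H))"
  have HX: "mmul H X = mmul Y H"
    using assms(3) by (simp add: Y_def mmul_assoc minv_left)
  have "in_span X Y"
    using commute_in_span[OF assms(1)] assms(5) by (simp add: Y_def)
  then obtain x y where Y: "Y = mlin x y X"
    by (auto simp: in_span_def)
  let ?t = "mtr X"
  have "mtr Y = ?t"
    using mtr_conj[of "minv H" X] assms(3) by (simp add: Y_def)
  then have tr: "2*x + y*?t = ?t"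
    by (simp add: Y mtr_mlin)
  have "mdet Y = 1"
    using assms(2,3) by (simp add: Y_def mdet_mmul)
  then have det: "x*x + x*y*?t + y*y = 1"
    using assms(2) by (simp add: Y mdet_mlin)
  have "(1 - y*y) * (?t*?t - 4) =
      4*(x*x + x*y*?t + y*y - 1) - (2*x + y*?t - ?t)*(2*x - y*?t + ?t) - 2*y*?t*(2*x + y*?t - ?t)"
    by (simp add: algebra_simps)
  then have "y*y = 1"
    using tr det assms(4) by simp
  then consider "y = 1" | "y = -1"
    by (metis square_eq_1_iff)
  then show ?thesis
  proof cases
    case 1
    then have "Y = X" using tr Y by (cases X) (simp add: mat_defs)
    then show ?thesis using HX by simp
  next
    case 2
    then have "Y = minv X" using tr Y by (simp flip: mlin_trace_eq_minv)
    then show ?thesis using inverting_trace_zero[OF assms(1)] HX by simp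
  qed
qed

section \<open>\<open>PSL\<^sub>2\<close> as classes of matrices\<close>

lemma pcls_mneg [simp]: "pcls (mneg A) = pcls A"
  by (auto simp: pcls_def)

lemma pcls_eq_iff: "pcls A = pcls B \<longleftrightarrow> A = B \<or> A = mneg B"
  by (auto simp: pcls_def doubleton_eq_iff)

lemma pcls_eq_pone_iff: "pcls A = pone \<longleftrightarrow> A = mid \<or> A = mneg mid"
  by (simp add: pone_def pcls_eq_iff)

lemma pmul_pcls: "pmul (pcls A) (pcls B) = pcls (mmul A B)"
proof -
  have "pmul (pcls A) (pcls B) = {mmul A B, mmul A (mneg B), mmul (mneg A) B, mmul (mneg A) (mneg B)}"
    unfolding pmul_def pcls_def by blast
  then show ?thesis by (auto simp: mmul_mneg pcls_def)
qed

lemma pinv_pcls: "pinv (pcls A) = pcls (minv A)"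
  by (auto simp: pinv_def pcls_def minv_mneg)

lemma ppow_pcls: "ppow (pcls A) n = pcls (mpow A n)"
  by (induction n) (auto simp: pone_def pmul_pcls)

lemma pzpow_pcls: "pzpow (pcls A) i = pcls (mzpow A i)"
  by (simp add: pzpow_def mzpow_def ppow_pcls pinv_pcls)

lemma PSL2_E:
  assumes "x \<in> PSL2"
  obtains A where "mdet A = 1" "x = pcls A"
  using assms by (auto simp: PSL2_def sl2_def mdet_def)

lemma PSL2_member: "x \<in> PSL2 \<Longrightarrow> A \<in> x \<Longrightarrow> mdet A = 1 \<and> x = pcls A"
  by (auto elim!: PSL2_E simp: pcls_def)

lemma pmul_assoc:
  "x \<in> PSL2 \<Longrightarrow> y \<in> PSL2 \<Longrightarrow> z \<in> PSL2 \<Longrightarrow> pmul (pmul x y) z = pmul x (pmul y z)"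
  by (auto elim!: PSL2_E simp: pmul_pcls mmul_assoc)

lemma pmul_pone: "x \<in> PSL2 \<Longrightarrow> pmul pone x = x" "x \<in> PSL2 \<Longrightarrow> pmul x pone = x"
  by (auto elim!: PSL2_E simp: pmul_pcls pone_def)

lemma pmul_pinv: "x \<in> PSL2 \<Longrightarrow> pmul (pinv x) x = pone"
  by (auto elim!: PSL2_E simp: pmul_pcls pinv_pcls pone_def minv_left)

text \<open>Lifts of commuting classes commute or anticommute, and in characteristic 0
  anticommuting forces trace 0.\<close>

lemma pcls_commute_lift:
  assumes "pmul (pcls X) (pcls Y) = pmul (pcls Y) (pcls X)" "mdet Y = 1"
    and "mtr (X::'a::field_char_0 mat2) \<noteq> 0"
  shows "mmul X Y = mmul Y X"
proof -
  have "mmul X Y = mmul Y X \<or> mmul X Y = mneg (mmul Y X)"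
    using assms(1) by (simp add: pmul_pcls pcls_eq_iff)
  then show ?thesis
    using anticommute_trace_zero[OF assms(2)] assms(3) by blast
qed

lemma pcls_trace_zero_involution: "mdet A = 1 \<Longrightarrow> mtr A = 0 \<Longrightarrow> pmul (pcls A) (pcls A) = pone"
  by (simp add: pmul_pcls mmul_self_trace_zero pcls_eq_pone_iff)

lemma pcls_nonscalar: "mdet A = 1 \<Longrightarrow> pcls A \<noteq> pone \<Longrightarrow> nonscalar A"
  using nonscalar_sl2 pcls_eq_pone_iff by blast

definition lift :: "'a::field psl2 \<Rightarrow> 'a mat2" where
  "lift x = (SOME A. A \<in> x)"

lemma lift_PSL2:
  assumes "x \<in> PSL2"
  shows "mdet (lift x) = 1 \<and> x = pcls (lift x)"
proof -
  obtain A where "x = pcls A"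
    using assms by (rule PSL2_E)
  then have "A \<in> x"
    by (simp add: pcls_def)
  then have "lift x \<in> x"
    unfolding lift_def by (rule someI)
  then show ?thesis
    using PSL2_member[OF assms] by blast
qed

lemma subgroup_PSL2_E:
  assumes "subgroup_PSL2 G" "x \<in> G"
  obtains A where "mdet A = 1" "x = pcls A"
proof -
  have "x \<in> PSL2"
    using assms by (auto simp: subgroup_PSL2_def)
  then obtain A where "mdet A = 1" "x = pcls A"
    by (rule PSL2_E)
  then show ?thesis
    by (rule that)
qed

lemma ppow_mem: "subgroup_PSL2 G \<Longrightarrow> x \<in> G \<Longrightarrow> ppow x n \<in> G"
  by (induction n) (simp_all add: subgroup_PSL2_def)

lemma pzpow_mem: "subgroup_PSL2 G \<Longrightarrow> x \<in> G \<Longrightarrow> pzpow x i \<in> G"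
  by (simp add: pzpow_def ppow_mem subgroup_PSL2_def)

section \<open>Finite groups in which commutation is transitive\<close>

context group
begin

definition conjg :: "'a \<Rightarrow> 'a \<Rightarrow> 'a" where
  "conjg h a = h \<otimes> a \<otimes> inv h"

definition centralizer :: "'a \<Rightarrow> 'a set" where
  "centralizer x = {y \<in> carrier G. y \<otimes> x = x \<otimes> y}"

definition conj_cover :: "'a \<Rightarrow> 'a set" where
  "conj_cover x = {u \<in> carrier G. u \<noteq> \<one> \<and> (\<exists>k\<in>carrier G. conjg (inv k) u \<in> centralizer x)}"

lemma finite_pow_eq_one:
  assumes "finite (carrier G)" "x \<in> carrier G"
  shows "\<exists>n::nat. n \<ge> 1 \<and> x [^] n = \<one>"
proof -
  have "range (\<lambda>n::nat. x [^] n) \<subseteq> carrier G"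
    using assms(2) by auto
  then have "\<not> inj (\<lambda>n::nat. x [^] n)"
    using assms(1) finite_imageD finite_subset infinite_UNIV_nat by blast
  then obtain i j :: nat where "i \<noteq> j" "x [^] i = x [^] j"
    unfolding inj_def by blast
  then obtain i j :: nat where "i < j" "x [^] i = x [^] j"
    by (metis linorder_neqE)
  moreover have "x [^] i \<otimes> x [^] (j - i) = x [^] j"
    using \<open>i < j\<close> assms(2) by (simp add: nat_pow_mult)
  ultimately have "x [^] i \<otimes> x [^] (j - i) = x [^] i \<otimes> \<one>"
    using assms(2) by simp
  then have "x [^] (j - i) = \<one>"
    using assms(2) by simp
  then show ?thesis
    using \<open>i < j\<close> by (intro exI[of _ "j - i"]) simp
qed

lemma inv_mult_cancel [simp]: "h \<in> carrier G \<Longrightarrow> a \<in> carrier G \<Longrightarrow> inv h \<otimes> (h \<otimes> a) = a"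
  by (simp flip: m_assoc)

lemma mult_inv_cancel [simp]: "h \<in> carrier G \<Longrightarrow> a \<in> carrier G \<Longrightarrow> h \<otimes> (inv h \<otimes> a) = a"
  by (simp flip: m_assoc)

lemma conjg_closed [simp]: "h \<in> carrier G \<Longrightarrow> a \<in> carrier G \<Longrightarrow> conjg h a \<in> carrier G"
  by (simp add: conjg_def)

lemma conjg_conjg:
  "h \<in> carrier G \<Longrightarrow> k \<in> carrier G \<Longrightarrow> a \<in> carrier G \<Longrightarrow> conjg h (conjg k a) = conjg (h \<otimes> k) a"
  by (simp add: conjg_def m_assoc inv_mult_group)

lemma conjg_inv_conjg [simp]: "h \<in> carrier G \<Longrightarrow> a \<in> carrier G \<Longrightarrow> conjg (inv h) (conjg h a) = a"
  by (simp add: conjg_def m_assoc)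

lemma conjg_conjg_inv [simp]: "h \<in> carrier G \<Longrightarrow> a \<in> carrier G \<Longrightarrow> conjg h (conjg (inv h) a) = a"
  by (simp add: conjg_def m_assoc)

lemma conjg_one_left [simp]: "a \<in> carrier G \<Longrightarrow> conjg \<one> a = a"
  by (simp add: conjg_def)

lemma conjg_eq_one_iff: "h \<in> carrier G \<Longrightarrow> a \<in> carrier G \<Longrightarrow> conjg h a = \<one> \<longleftrightarrow> a = \<one>"
  by (metis conjg_inv_conjg conjg_def inv_closed one_closed r_inv r_one)

lemma conjg_commute_iff:
  assumes "h \<in> carrier G" "a \<in> carrier G" "b \<in> carrier G"
  shows "conjg h a \<otimes> conjg h b = conjg h b \<otimes> conjg h a \<longleftrightarrow> a \<otimes> b = b \<otimes> a"
proof -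
  have mult: "conjg h a \<otimes> conjg h b = conjg h (a \<otimes> b)" if "a \<in> carrier G" "b \<in> carrier G" for a b
    using assms(1) that by (simp add: conjg_def m_assoc)
  have "conjg h (a \<otimes> b) = conjg h (b \<otimes> a) \<longleftrightarrow> a \<otimes> b = b \<otimes> a"
    using assms by (metis conjg_inv_conjg m_closed)
  then show ?thesis
    using assms by (simp add: mult)
qed

lemma commute_inv:
  assumes "a \<in> carrier G" "x \<in> carrier G" "a \<otimes> x = x \<otimes> a"
  shows "inv a \<otimes> x = x \<otimes> inv a"
proof -
  have "inv a \<otimes> x = inv a \<otimes> (x \<otimes> a) \<otimes> inv a"
    using assms(1,2) by (simp add: m_assoc)
  also have "\<dots> = inv a \<otimes> (a \<otimes> x) \<otimes> inv a"
    using assms(3) by simp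
  also have "\<dots> = x \<otimes> inv a"
    using assms(1,2) by (simp add: m_assoc)
  finally show ?thesis .
qed

lemma centralizer_subgroup: "x \<in> carrier G \<Longrightarrow> subgroup (centralizer x) G"
proof (rule subgroupI)
  fix a b assume "x \<in> carrier G" "a \<in> centralizer x" "b \<in> centralizer x"
  then show "inv a \<in> centralizer x" "a \<otimes> b \<in> centralizer x"
    by (auto simp: centralizer_def commute_inv m_assoc) (metis m_assoc)
qed (auto simp: centralizer_def)

lemma conjg_mem_centralizer_iff:
  assumes "k \<in> carrier G" "u \<in> carrier G" "x \<in> carrier G"
  shows "conjg (inv k) u \<in> centralizer x \<longleftrightarrow> u \<otimes> conjg k x = conjg k x \<otimes> u"
  using conjg_commute_iff[of "inv k" u "conjg k x"] assms
  by (auto simp: centralizer_def)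

lemma card_conjugates_in_centralizer:
  assumes "finite (carrier G)" "k \<in> carrier G" "x \<in> carrier G"
  shows "card {u \<in> carrier G. u \<noteq> \<one> \<and> conjg (inv k) u \<in> centralizer x} = card (centralizer x) - 1"
proof -
  let ?C = "centralizer x"
  have C: "?C \<subseteq> carrier G" "\<one> \<in> ?C" "finite ?C"
    using assms(1,3) finite_subset by (auto simp: centralizer_def)
  have "{u \<in> carrier G. u \<noteq> \<one> \<and> conjg (inv k) u \<in> ?C} = conjg k ` (?C - {\<one>})"
  proof (intro equalityI subsetI)
    fix u assume "u \<in> {u \<in> carrier G. u \<noteq> \<one> \<and> conjg (inv k) u \<in> ?C}"
    then show "u \<in> conjg k ` (?C - {\<one>})"
      using assms(2) by (intro image_eqI[of u _ "conjg (inv k) u"]) (auto simp: conjg_eq_one_iff)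
  qed (use assms(2) C(1) in \<open>auto simp: conjg_eq_one_iff\<close>)
  moreover have "inj_on (conjg k) (?C - {\<one>})"
  proof (rule inj_onI)
    fix a b assume "a \<in> ?C - {\<one>}" "b \<in> ?C - {\<one>}" "conjg k a = conjg k b"
    then have "a \<in> carrier G" "b \<in> carrier G" "conjg (inv k) (conjg k a) = conjg (inv k) (conjg k b)"
      using C(1) by auto
    then show "a = b"
      using assms(2) by simp
  qed
  ultimately show ?thesis
    using C by (simp add: card_image)
qed

text \<open>A counting argument. \<open>conj_cover x\<close> is the union of the conjugates of
  \<open>centralizer x - {\<one>}\<close>. Under the two hypotheses below, distinct conjugates of a
  centraliser meet trivially and a centraliser is its own normaliser, so for \<open>x \<noteq> \<one>\<close>
  the set \<open>conj_cover x\<close> contains at least half of the group. If \<open>centralizer a\<close> is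
  proper, some \<open>z \<noteq> \<one>\<close> lies outside \<open>conj_cover a\<close>, and then \<open>conj_cover a\<close> and
  \<open>conj_cover z\<close> are disjoint subsets of \<open>carrier G - {\<one>}\<close>, which is impossible.\<close>

context
  assumes finite_carrier: "finite (carrier G)"
    and commute_trans: "\<And>x y z. x \<in> carrier G \<Longrightarrow> y \<in> carrier G \<Longrightarrow> z \<in> carrier G \<Longrightarrow>
      y \<noteq> \<one> \<Longrightarrow> x \<otimes> y = y \<otimes> x \<Longrightarrow> y \<otimes> z = z \<otimes> y \<Longrightarrow> x \<otimes> z = z \<otimes> x"
    and commute_conjg: "\<And>x h. x \<in> carrier G \<Longrightarrow> x \<noteq> \<one> \<Longrightarrow> h \<in> carrier G \<Longrightarrow>
      conjg h x \<otimes> x = x \<otimes> conjg h x \<Longrightarrow> h \<otimes> x = x \<otimes> h"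
begin

lemma mem_centralizer_if_conjugate_meets:
  assumes x: "x \<in> carrier G" "x \<noteq> \<one>" and y: "y \<in> centralizer x" "y \<noteq> \<one>"
    and w: "w \<in> carrier G" "conjg (inv w) y \<in> centralizer x"
  shows "w \<in> centralizer x"
proof -
  have yG: "y \<in> carrier G" and yx: "x \<otimes> y = y \<otimes> x"
    using y(1) unfolding centralizer_def by auto
  have "conjg (inv w) y \<otimes> x = x \<otimes> conjg (inv w) y"
    using w(2) unfolding centralizer_def by blast
  then have "conjg (inv w) y \<otimes> y = y \<otimes> conjg (inv w) y"
    using commute_trans[OF conjg_closed[OF inv_closed[OF w(1)] yG] x(1) yG x(2) _ yx] by blast
  then have "inv w \<otimes> y = y \<otimes> inv w"
    using commute_conjg[OF yG y(2) inv_closed[OF w(1)]] by blast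
  then have "w \<otimes> y = y \<otimes> w"
    using commute_inv[of "inv w" y] yG w(1) by simp
  then have "w \<otimes> x = x \<otimes> w"
    using commute_trans[OF w(1) yG x(1) y(2)] yx by simp
  then show ?thesis
    using w(1) unfolding centralizer_def by blast
qed

lemma conjugators_into_centralizer:
  assumes x: "x \<in> carrier G" "x \<noteq> \<one>" and u: "u \<in> carrier G" "u \<noteq> \<one>"
    and h: "h \<in> carrier G" "conjg (inv h) u \<in> centralizer x"
  shows "{k \<in> carrier G. conjg (inv k) u \<in> centralizer x} = (\<lambda>w. h \<otimes> w) ` centralizer x"
proof -
  interpret C: subgroup "centralizer x" G
    using centralizer_subgroup[OF x(1)] .
  define y where "y = conjg (inv h) u"
  have y: "y \<in> centralizer x" "y \<noteq> \<one>"
    using h u by (auto simp: y_def conjg_eq_one_iff)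
  have shift: "conjg (inv (h \<otimes> w)) u = conjg (inv w) y" if "w \<in> carrier G" for w
    using h(1) u(1) that by (simp add: y_def conjg_conjg inv_mult_group)
  have "k \<in> (\<lambda>w. h \<otimes> w) ` centralizer x"
    if "k \<in> carrier G" "conjg (inv k) u \<in> centralizer x" for k
  proof -
    have "conjg (inv (inv h \<otimes> k)) y = conjg (inv k) u"
      using shift[of "inv h \<otimes> k"] h(1) that(1) by simp
    then have "inv h \<otimes> k \<in> centralizer x"
      using mem_centralizer_if_conjugate_meets[OF x y, of "inv h \<otimes> k"] h(1) that by simp
    moreover have "k = h \<otimes> (inv h \<otimes> k)"
      using h(1) that(1) by simp
    ultimately show ?thesis
      by (intro image_eqI)
  qed
  moreover have "h \<otimes> w \<in> carrier G \<and> conjg (inv (h \<otimes> w)) u \<in> centralizer x"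
    if "w \<in> centralizer x" for w
  proof -
    have "w \<in> carrier G"
      using that unfolding centralizer_def by blast
    moreover have "conjg (inv w) y \<in> centralizer x"
      unfolding conjg_def using that y(1) by (intro C.m_closed C.m_inv_closed)
    ultimately show ?thesis
      using h(1) shift by simp
  qed
  ultimately show ?thesis
    by blast
qed

lemma card_conjugators_into_centralizer:
  assumes "x \<in> carrier G" "x \<noteq> \<one>" "u \<in> carrier G"
  shows "card {k \<in> carrier G. u \<noteq> \<one> \<and> conjg (inv k) u \<in> centralizer x}
    = (if u \<in> conj_cover x then card (centralizer x) else 0)"
proof (cases "u \<in> conj_cover x")
  case True
  then obtain h where h: "h \<in> carrier G" "conjg (inv h) u \<in> centralizer x" and "u \<noteq> \<one>"
    by (auto simp: conj_cover_def)
  then have "{k \<in> carrier G. u \<noteq> \<one> \<and> conjg (inv k) u \<in> centralizer x} = (\<lambda>w. h \<otimes> w) ` centralizer x"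
    using conjugators_into_centralizer[OF assms(1,2,3) _ h] by simp
  moreover have "inj_on (\<lambda>w. h \<otimes> w) (centralizer x)"
    using inj_on_cmult[OF h(1)] inj_on_subset by (fastforce simp: centralizer_def)
  ultimately show ?thesis
    using True by (simp add: card_image)
next
  case False
  then have "{k \<in> carrier G. u \<noteq> \<one> \<and> conjg (inv k) u \<in> centralizer x} = {}"
    using assms(3) by (auto simp: conj_cover_def)
  then show ?thesis
    using False by (simp only: card.empty if_False)
qed

lemma card_conj_cover:
  assumes "x \<in> carrier G" "x \<noteq> \<one>"
  shows "card (conj_cover x) * card (centralizer x) = card (carrier G) * (card (centralizer x) - 1)"
proof -
  let ?P = "\<lambda>u k. u \<noteq> \<one> \<and> conjg (inv k) u \<in> centralizer x"
  have "card (carrier G) * (card (centralizer x) - 1) = (\<Sum>k\<in>carrier G. card {u \<in> carrier G. ?P u k})"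
    using card_conjugates_in_centralizer[OF finite_carrier _ assms(1)] by simp
  also have "\<dots> = (\<Sum>u\<in>carrier G. card {k \<in> carrier G. ?P u k})"
    using sum.swap_restrict[OF finite_carrier finite_carrier, of "\<lambda>_ _. 1" "\<lambda>k u. ?P u k"]
    by (simp only: card_eq_sum)
  also have "\<dots> = (\<Sum>u\<in>carrier G. if u \<in> conj_cover x then card (centralizer x) else 0)"
    using card_conjugators_into_centralizer[OF assms] by simp
  also have "\<dots> = card (conj_cover x) * card (centralizer x)"
    using finite_carrier by (simp add: sum.If_cases conj_cover_def Int_def)
  finally show ?thesis by simp
qed

lemma conj_cover_disjoint:
  assumes x: "x \<in> carrier G" and z: "z \<in> carrier G" "z \<noteq> \<one>" "z \<notin> conj_cover x"
  shows "conj_cover x \<inter> conj_cover z = {}"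
proof (rule ccontr)
  assume "conj_cover x \<inter> conj_cover z \<noteq> {}"
  then obtain u k j where u: "u \<in> carrier G" "u \<noteq> \<one>"
    and k: "k \<in> carrier G" "conjg (inv k) u \<in> centralizer x"
    and j: "j \<in> carrier G" "conjg (inv j) u \<in> centralizer z"
    by (auto simp: conj_cover_def)
  have "u \<otimes> conjg k x = conjg k x \<otimes> u" "u \<otimes> conjg j z = conjg j z \<otimes> u"
    using conjg_mem_centralizer_iff k j u(1) x z(1) by blast+
  then have "conjg j z \<otimes> conjg k x = conjg k x \<otimes> conjg j z"
    using commute_trans[OF conjg_closed[OF j(1) z(1)] u(1) conjg_closed[OF k(1) x] u(2)] by simp
  then have "z \<otimes> conjg (inv j \<otimes> k) x = conjg (inv j \<otimes> k) x \<otimes> z"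
    using conjg_commute_iff[of "inv j" "conjg j z" "conjg k x"] k j x z(1)
    by (simp add: conjg_conjg)
  then have "conjg (inv (inv j \<otimes> k)) z \<in> centralizer x"
    using conjg_mem_centralizer_iff[of "inv j \<otimes> k" z x] k j x z(1) by simp
  then have "z \<in> conj_cover x"
    using z k(1) j(1) unfolding conj_cover_def by blast
  then show False
    using z(3) by contradiction
qed

lemma card_conj_cover_ge:
  assumes "x \<in> carrier G" "x \<noteq> \<one>"
  shows "card (carrier G) \<le> 2 * card (conj_cover x)"
proof -
  let ?g = "card (carrier G)" and ?m = "card (centralizer x)" and ?u = "card (conj_cover x)"
  have "finite (centralizer x)" "{\<one>, x} \<subseteq> centralizer x"
    using assms(1) finite_carrier finite_subset by (auto simp: centralizer_def)
  then have "card {\<one>, x} \<le> ?m"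
    by (rule card_mono)
  then have m: "2 \<le> ?m"
    using assms(2) by simp
  have "?g * ?m \<le> ?g * (2 * (?m - 1))"
    using m by (intro mult_le_mono2) linarith
  also have "\<dots> = (2 * ?u) * ?m"
    using card_conj_cover[OF assms] by (simp only: mult.assoc mult.left_commute)
  finally have "?g * ?m \<le> (2 * ?u) * ?m" .
  moreover have "0 < ?m"
    using m by linarith
  ultimately show ?thesis
    using mult_le_cancel2[of ?g ?m "2 * ?u"] by blast

qed

lemma conj_cover_ne:
  assumes a: "a \<in> carrier G" "a \<noteq> \<one>" and m: "card (centralizer a) < card (carrier G)"
  shows "\<exists>z \<in> carrier G. z \<noteq> \<one> \<and> z \<notin> conj_cover a"
proof (rule ccontr)
  let ?g = "card (carrier G)" and ?m = "card (centralizer a)"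
  assume "\<not> ?thesis"
  then have "conj_cover a = carrier G - {\<one>}"
    by (auto simp: conj_cover_def)
  then have "(?g - 1) * ?m = ?g * (?m - 1)"
    using card_conj_cover[OF a] finite_carrier by simp
  moreover have "(?g - 1) * ?m = ?g * ?m - ?m" "?g * (?m - 1) = ?g * ?m - ?g"
    by (simp_all add: diff_mult_distrib diff_mult_distrib2)
  moreover have "1 \<le> ?m"
    using a(1) finite_carrier finite_subset
    by (auto simp: Suc_le_eq card_gt_0_iff centralizer_def)
  moreover have "?m \<le> ?g * ?m" "?g \<le> ?g * ?m"
    using mult_le_mono1[of 1 ?g ?m] mult_le_mono2[of 1 ?m ?g] m \<open>1 \<le> ?m\<close> by simp_all
  ultimately show False
    using m by linarith
qed

theorem finite_group_commute:
  assumes a: "a \<in> carrier G" and b: "b \<in> carrier G"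
  shows "a \<otimes> b = b \<otimes> a"
proof (rule ccontr)
  assume nc: "a \<otimes> b \<noteq> b \<otimes> a"
  then have a1: "a \<noteq> \<one>"
    using b by auto
  have "b \<notin> centralizer a"
    using nc unfolding centralizer_def by auto
  then have "centralizer a \<subset> carrier G"
    using b by (auto simp: centralizer_def)
  then have "card (centralizer a) < card (carrier G)"
    using finite_carrier by (rule psubset_card_mono[rotated])
  then obtain z where z: "z \<in> carrier G" "z \<noteq> \<one>" "z \<notin> conj_cover a"
    using conj_cover_ne[OF a a1] by blast
  have U: "conj_cover y \<subseteq> carrier G - {\<one>}" for y
    by (auto simp: conj_cover_def)
  have "card (conj_cover a) + card (conj_cover z) = card (conj_cover a \<union> conj_cover z)"
    using conj_cover_disjoint[OF a z] U finite_carrier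
    by (metis card_Un_disjoint finite_Diff finite_subset)
  also have "\<dots> \<le> card (carrier G) - 1"
    using U finite_carrier card_mono[of "carrier G - {\<one>}"] by (simp add: Un_least)
  finally have "card (conj_cover a) + card (conj_cover z) \<le> card (carrier G) - 1" .
  moreover have "card (carrier G) \<ge> 1"
    using finite_carrier by (auto simp: Suc_le_eq card_gt_0_iff)
  ultimately show False
    using card_conj_cover_ge[OF a a1] card_conj_cover_ge[OF z(1,2)] by linarith

qed

end

end

section \<open>The valuation\<close>

context
  fixes v :: "'a::field_char_0 \<Rightarrow> int"
  assumes v: "nonarch_local_field v"
begin

lemma v_mult: "x \<noteq> 0 \<Longrightarrow> y \<noteq> 0 \<Longrightarrow> v (x*y) = v x + v y"
  using v by (simp add: nonarch_local_field_def)

lemma v_add: "x \<noteq> 0 \<Longrightarrow> y \<noteq> 0 \<Longrightarrow> x + y \<noteq> 0 \<Longrightarrow> v (x+y) \<ge> min (v x) (v y)"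
  using v by (simp add: nonarch_local_field_def)

lemma v_one: "v 1 = 0"
  using v_mult[of 1 1] by simp

lemma v_uminus: "v (-x) = v x"
proof (cases "x = 0")
  case False
  have "v (-1) = 0"
    using v_mult[of "-1" "-1"] v_one by simp
  with False show ?thesis
    using v_mult[of "-1" x] by simp
qed simp

lemma v_inverse: "x \<noteq> 0 \<Longrightarrow> v (inverse x) = - v x"
  using v_mult[of x "inverse x"] v_one by simp

lemma v_power: "x \<noteq> 0 \<Longrightarrow> v (x^n) = int n * v x"
  by (induction n) (simp_all add: v_one v_mult algebra_simps)

lemma vsmall_add: "vsmall v n x \<Longrightarrow> vsmall v n y \<Longrightarrow> vsmall v n (x+y)"
  using v_add[of x y] by (cases "x = 0 \<or> y = 0 \<or> x + y = 0") (auto simp: vsmall_def)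

lemma vsmall_uminus: "vsmall v n x \<Longrightarrow> vsmall v n (-x)"
  by (simp add: vsmall_def v_uminus)

lemma vsmall_diff: "vsmall v n x \<Longrightarrow> vsmall v n y \<Longrightarrow> vsmall v n (x-y)"
  using vsmall_add[of n x "-y"] vsmall_uminus by simp

lemma vsmall_mult: "vsmall v n x \<Longrightarrow> vsmall v m y \<Longrightarrow> vsmall v (n+m) (x*y)"
  by (cases "x = 0 \<or> y = 0") (auto simp: vsmall_def v_mult)

lemma vsmall_mono: "vsmall v n x \<Longrightarrow> m \<le> n \<Longrightarrow> vsmall v m x"
  by (auto simp: vsmall_def)

lemma vsmall_exists: "\<exists>n. vsmall v n x"
  by (auto simp: vsmall_def)

lemma vint_iff_vsmall: "vint v x \<longleftrightarrow> vsmall v 0 x"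
  by (simp add: vint_def vsmall_def)

lemma vint_0 [simp]: "vint v 0" and vint_1 [simp]: "vint v 1"
  by (simp_all add: vint_def v_one)

lemma vint_add: "vint v x \<Longrightarrow> vint v y \<Longrightarrow> vint v (x+y)"
  by (simp add: vint_iff_vsmall vsmall_add)

lemma vint_uminus: "vint v x \<Longrightarrow> vint v (-x)"
  by (simp add: vint_iff_vsmall vsmall_uminus)

lemma vint_mult: "vint v x \<Longrightarrow> vint v y \<Longrightarrow> vint v (x*y)"
  using vsmall_mult[of 0 x 0 y] by (simp add: vint_iff_vsmall)

lemma vint_square_imp: "vint v (x*x) \<Longrightarrow> vint v x"
  by (cases "x = 0") (auto simp: vint_def v_mult)

text \<open>A root \<open>x\<close> of \<open>x\<^sup>2 + y t x + y\<^sup>2 = 1\<close> with \<open>y, t\<close> integral is integral: otherwise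
  \<open>x\<^sup>2\<close> would be the unique term of smallest valuation.\<close>

lemma vint_quadratic_root:
  assumes "vint v y" "vint v t" "x*x + x*y*t + y*y = 1"
  shows "vint v x"
proof (rule ccontr)
  assume "\<not> vint v x"
  then have x: "x \<noteq> 0" "v x < 0" by (auto simp: vint_def)
  have "vsmall v (v x) (x * (y*t))"
    using vsmall_mult[of "v x" x 0 "y*t"] vint_mult[OF assms(1,2)] by (simp add: vint_iff_vsmall vsmall_def)
  moreover have "vsmall v (v x) (y*y)" "vsmall v (v x) 1"
    using vint_mult[OF assms(1,1)] vsmall_mono x(2) by (auto simp: vint_iff_vsmall vsmall_def v_one)
  moreover have "x*x = 1 - x*(y*t) - y*y"
    using assms(3) by (simp add: algebra_simps)
  ultimately have "vsmall v (v x) (x*x)"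
    using vsmall_diff by presburger
  then show False
    using x by (simp add: vsmall_def v_mult)
qed

lemma finite_residue_system:
  "\<exists>S. finite S \<and> (\<forall>x. vint v x \<longrightarrow> (\<exists>s\<in>S. vsmall v (int N) (x - s)))"
proof (induction N)
  case 0
  show ?case by (rule exI[of _ "{0}"]) (simp add: vint_iff_vsmall)
next
  case (Suc N)
  then obtain S where S: "finite S" "\<forall>x. vint v x \<longrightarrow> (\<exists>s\<in>S. vsmall v (int N) (x - s))"
    by blast
  obtain S1 where S1: "finite S1" "\<forall>x. vint v x \<longrightarrow> (\<exists>s\<in>S1. vsmall v 1 (x - s))"
    using v by (auto simp: nonarch_local_field_def)
  obtain p where p: "p \<noteq> 0" "v p = 1"
    using v by (auto simp: nonarch_local_field_def)
  have pN: "p^N \<noteq> 0" "v (p^N) = int N"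
    using p by (simp_all add: v_power)
  let ?S = "(\<lambda>(s,t). s + p^N * t) ` (S \<times> S1)"
  have "\<exists>r\<in>?S. vsmall v (int (Suc N)) (x - r)" if x: "vint v x" for x
  proof -
    obtain s where s: "s \<in> S" "vsmall v (int N) (x - s)"
      using S x by blast
    define y where "y = (x - s) / p^N"
    have "vint v y"
    proof (cases "x = s")
      case False
      then have "v (x - s) = v y + v (p^N)"
        using v_mult[of y "p^N"] pN by (simp add: y_def)
      then show ?thesis
        using s(2) False pN by (simp add: vint_def vsmall_def)
    qed (simp add: y_def)
    then obtain t where t: "t \<in> S1" "vsmall v 1 (y - t)"
      using S1 by blast
    have "x - (s + p^N * t) = p^N * (y - t)"
      using pN by (simp add: y_def field_simps)
    moreover have "vsmall v (int N + 1) (p^N * (y - t))"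
      using vsmall_mult[of "int N" "p^N" 1 "y - t"] t pN by (simp add: vsmall_def)
    ultimately show ?thesis
      using s(1) t(1) by (intro bexI[of _ "s + p^N * t"]) (auto simp: add.commute)
  qed
  moreover have "finite ?S"
    using S(1) S1(1) by simp
  ultimately show ?case
    by blast
qed

end

section \<open>Lattices and fixed vertices\<close>

definition std_lattice :: "('a::field \<Rightarrow> int) \<Rightarrow> ('a \<times> 'a) set" where
  "std_lattice v = {p. vint v (fst p) \<and> vint v (snd p)}"

definition basis_mat :: "'a::field \<times> 'a \<Rightarrow> 'a \<times> 'a \<Rightarrow> 'a mat2" where
  "basis_mat e1 e2 = (fst e1, fst e2, snd e1, snd e2)"

text \<open>\<open>minv\<close> is the adjugate, the inverse only in \<open>SL\<^sub>2\<close>; bases need the inverse in \<open>GL\<^sub>2\<close>.\<close>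

definition ginv :: "'a::field mat2 \<Rightarrow> 'a mat2" where
  "ginv E = mmul (smat (inverse (mdet E))) (minv E)"

definition coord :: "'a::field mat2 \<Rightarrow> 'a mat2 \<Rightarrow> 'a mat2" where
  "coord A E = mmul (ginv E) (mmul A E)"

definition integral_mat :: "('a::field \<Rightarrow> int) \<Rightarrow> 'a mat2 \<Rightarrow> bool" where
  "integral_mat v = (\<lambda>(a,b,c,d). vint v a \<and> vint v b \<and> vint v c \<and> vint v d)"

lemma lattice_of_eq_image: "lattice_of v e1 e2 = mat_act (basis_mat e1 e2) ` std_lattice v"
  unfolding lattice_of_def std_lattice_def basis_mat_def mat_act_def
  by (cases e1; cases e2) (auto simp: algebra_simps image_def)

lemma hclass_eq_image: "hclass L = (\<lambda>c. mat_act (smat c) ` L) ` {c. c \<noteq> 0}"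
  unfolding hclass_def by (auto simp: mat_act_def smat_def image_def split_beta')

lemma mem_hclass_self: "L \<in> hclass L"
  unfolding hclass_def by (rule CollectI, rule exI[of _ 1]) (simp add: case_prod_beta')

lemma BT_vertices_E:
  assumes "X \<in> BT_vertices v"
  obtains e1 e2 where "mdet (basis_mat e1 e2) \<noteq> 0" "X = hclass (lattice_of v e1 e2)"
proof -
  from assms obtain e1 e2 where "fst e1 * snd e2 - snd e1 * fst e2 \<noteq> 0" "X = hclass (lattice_of v e1 e2)"
    unfolding BT_vertices_def is_lattice_def by blast
  then show ?thesis
    using that by (simp add: basis_mat_def mdet_def mult.commute)
qed

lemma mat_act_mmul: "mat_act (mmul A B) p = mat_act A (mat_act B p)"
  by (cases A; cases B; cases p) (simp add: mat_act_def mmul_def algebra_simps)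

lemma image_mat_act_mmul: "mat_act A ` mat_act B ` S = mat_act (mmul A B) ` S"
  by (simp add: image_image mat_act_mmul)

lemma mat_act_mid [simp]: "mat_act mid p = p"
  by (cases p) (simp add: mat_act_def mid_def)

lemma mat_act_minv_cancel: "mdet M = 1 \<Longrightarrow> mat_act (minv M) (mat_act M p) = p"
  by (simp add: minv_left flip: mat_act_mmul)

lemma vert_act_mmul: "vert_act (mmul A B) X = vert_act A (vert_act B X)"
  by (simp add: vert_act_def image_image flip: image_mat_act_mmul)

lemma vert_act_mid: "vert_act mid X = X"
  by (simp add: vert_act_def)

lemma mmul_minv_self: "mmul (minv E) E = smat (mdet E)" "mmul E (minv E) = smat (mdet E)"
  by (cases E; simp add: mat_defs algebra_simps)+

lemma mmul_smat_smat: "mmul (smat a) (smat b) = smat (a * b)"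
  by (simp add: mat_defs)

lemma ginv_left: "mdet E \<noteq> 0 \<Longrightarrow> mmul (ginv E) E = mid"
  by (simp add: ginv_def mmul_assoc mmul_minv_self mmul_smat_smat) (simp add: smat_def mid_def)

lemma ginv_right:
  assumes "mdet E \<noteq> 0"
  shows "mmul E (ginv E) = mid"
proof -
  have "mmul E (ginv E) = mmul (mmul (smat (inverse (mdet E))) E) (minv E)"
    unfolding ginv_def smat_commute[of _ E] by (simp only: mmul_assoc)
  also have "\<dots> = mid"
    using assms by (simp add: mmul_assoc mmul_minv_self mmul_smat_smat) (simp add: smat_def mid_def)
  finally show ?thesis .
qed

lemma ginv_right_cancel: "mdet E \<noteq> 0 \<Longrightarrow> mmul E (mmul (ginv E) X) = X"
  by (simp add: ginv_right flip: mmul_assoc)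

lemma ginv_left_cancel: "mdet E \<noteq> 0 \<Longrightarrow> mmul (ginv E) (mmul E X) = X"
  by (simp add: ginv_left flip: mmul_assoc)

lemma coord_intertwine: "mdet E \<noteq> 0 \<Longrightarrow> mmul E (coord A E) = mmul A E"
  by (simp add: coord_def ginv_right_cancel)

lemma coord_inverse: "mdet E \<noteq> 0 \<Longrightarrow> mmul E (mmul (coord A E) (ginv E)) = A"
  by (simp add: coord_def mmul_assoc ginv_right_cancel ginv_right)

lemma coord_mmul: "mdet E \<noteq> 0 \<Longrightarrow> coord (mmul A B) E = mmul (coord A E) (coord B E)"
  by (simp add: coord_def mmul_assoc ginv_right_cancel)

lemma coord_mid: "mdet E \<noteq> 0 \<Longrightarrow> coord mid E = mid"
  by (simp add: coord_def ginv_left)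

lemma mdet_coord:
  assumes "mdet E \<noteq> 0"
  shows "mdet (coord A E) = mdet A"
proof -
  have "mdet (ginv E) * mdet E = 1"
    using ginv_left[OF assms] by (metis mdet_mid mdet_mmul)
  moreover have "mdet (coord A E) = mdet A * (mdet (ginv E) * mdet E)"
    by (simp add: coord_def mdet_mmul algebra_simps)
  ultimately show ?thesis
    by simp
qed

lemma mtr_coord: "mdet E \<noteq> 0 \<Longrightarrow> mtr (coord A E) = mtr A"
  by (simp add: coord_def mtr_mmul_commute[of "ginv E"] mmul_assoc ginv_right)

lemma coord_minv:
  assumes "mdet A = 1" "mdet E \<noteq> 0"
  shows "coord (minv A) E = minv (coord A E)"
proof -
  have "mmul (coord (minv A) E) (coord A E) = mid"
    using assms by (simp add: coord_mid minv_left flip: coord_mmul)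
  then have "mmul (mmul (coord (minv A) E) (coord A E)) (minv (coord A E)) = minv (coord A E)"
    by simp
  then show ?thesis
    using assms by (simp add: mmul_assoc minv_right mdet_coord)
qed

lemma mlin_intertwine:
  assumes "mmul E M = mmul A E"
  shows "mmul E (mlin x y M) = mmul (mlin x y A) E"
proof -
  obtain e f g h where E: "E = (e,f,g,h)" by (cases E)
  obtain a b c d where A: "A = (a,b,c,d)" by (cases A)
  obtain p q r s where M: "M = (p,q,r,s)" by (cases M)
  from assms have "e*p + f*r = a*e + b*g" "e*q + f*s = a*f + b*h"
    "g*p + h*r = c*e + d*g" "g*q + h*s = c*f + d*h"
    by (simp_all add: E A M mmul_def)
  then show ?thesis
    by (simp add: E A M mlin_def mmul_def) (intro conjI; algebra)
qed

lemma coord_mlin: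
  assumes "mdet E \<noteq> 0"
  shows "coord (mlin x y A) E = mlin x y (coord A E)"
proof -
  have "mmul E (mlin x y (coord A E)) = mmul (mlin x y A) E"
    by (rule mlin_intertwine[OF coord_intertwine[OF assms]])
  then show ?thesis
    using assms by (metis coord_def ginv_left_cancel)
qed

lemma Fix_pmul: "X \<in> Fix v x \<Longrightarrow> X \<in> Fix v y \<Longrightarrow> X \<in> Fix v (pmul x y)"
  by (auto simp: Fix_def pmul_def vert_act_mmul)

lemma Fix_pinv:
  assumes "x \<in> PSL2" "X \<in> Fix v x"
  shows "X \<in> Fix v (pinv x)"
proof -
  have "vert_act (minv A) X = X" if "A \<in> x" for A
  proof -
    have "vert_act (minv A) X = vert_act (minv A) (vert_act A X)"
      using assms(2) that by (simp add: Fix_def)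
    also have "\<dots> = X"
      using PSL2_member[OF assms(1) that] by (simp add: minv_left vert_act_mid flip: vert_act_mmul)
    finally show ?thesis .
  qed
  then show ?thesis
    using assms(2) by (auto simp: Fix_def pinv_def)
qed

context
  fixes v :: "'a::field_char_0 \<Rightarrow> int"
  assumes v: "nonarch_local_field v"
begin

lemma integral_mat_mlin: "integral_mat v M \<Longrightarrow> vint v x \<Longrightarrow> vint v y \<Longrightarrow> integral_mat v (mlin x y M)"
  by (cases M) (simp add: integral_mat_def mlin_def vint_add[OF v] vint_mult[OF v])

lemma integral_mat_mtr: "integral_mat v M \<Longrightarrow> vint v (mtr M)"
  by (cases M) (simp add: integral_mat_def mtr_def vint_add[OF v])

lemma integral_mat_minv: "integral_mat v M \<Longrightarrow> integral_mat v (minv M)"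
  by (cases M) (simp add: integral_mat_def minv_def vint_uminus[OF v])

lemma std_lattice_basis: "(1,0) \<in> std_lattice v" "(0,1) \<in> std_lattice v"
  by (simp_all add: std_lattice_def vint_0[OF v] vint_1[OF v])

lemma mat_act_std_lattice_subset:
  "integral_mat v M \<Longrightarrow> mat_act M ` std_lattice v \<subseteq> std_lattice v"
  by (cases M) (auto simp: mat_act_def std_lattice_def integral_mat_def vint_add[OF v] vint_mult[OF v])

lemma mat_act_std_lattice_iff:
  assumes "mdet M = 1"
  shows "mat_act M ` std_lattice v = std_lattice v \<longleftrightarrow> integral_mat v M"
proof
  assume M: "mat_act M ` std_lattice v = std_lattice v"
  from std_lattice_basis have "mat_act M (1,0) \<in> std_lattice v" "mat_act M (0,1) \<in> std_lattice v"
    using M by blast+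
  then show "integral_mat v M"
    by (cases M) (simp add: mat_act_def std_lattice_def integral_mat_def)
next
  assume M: "integral_mat v M"
  have "std_lattice v \<subseteq> mat_act M ` mat_act (minv M) ` std_lattice v"
    using assms by (simp add: image_mat_act_mmul minv_right)
  also have "\<dots> \<subseteq> mat_act M ` std_lattice v"
    using mat_act_std_lattice_subset[OF integral_mat_minv[OF M]] by blast
  finally show "mat_act M ` std_lattice v = std_lattice v"
    using mat_act_std_lattice_subset[OF M] by blast
qed

text \<open>If \<open>M \<O>\<^sup>2 = c \<O>\<^sup>2\<close> with \<open>det M = 1\<close>, every entry \<open>m\<close> of \<open>M\<close> has \<open>m/c\<close> and (through
  \<open>M\<^sup>-\<^sup>1\<close>) \<open>m c\<close> integral, hence \<open>m\<^sup>2\<close> integral.\<close>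

lemma integral_if_homothetic:
  assumes "mdet M = 1" "c \<noteq> 0" "mat_act M ` std_lattice v = mat_act (smat c) ` std_lattice v"
  shows "integral_mat v M"
proof -
  obtain a b d e where M: "M = (a,b,d,e)" by (cases M)
  have "mat_act M (1,0) \<in> mat_act (smat c) ` std_lattice v" "mat_act M (0,1) \<in> mat_act (smat c) ` std_lattice v"
    using assms(3) std_lattice_basis by blast+
  then have div: "vint v (a/c)" "vint v (d/c)" "vint v (b/c)" "vint v (e/c)"
    using assms(2) by (auto simp: M mat_act_def smat_def std_lattice_def)
  have pullback: "mat_act (minv M) z \<in> std_lattice v" if "z \<in> mat_act M ` std_lattice v" for z
    using that assms(1) by (auto simp: mat_act_minv_cancel)
  have "mat_act (smat c) (1,0) \<in> mat_act M ` std_lattice v" "mat_act (smat c) (0,1) \<in> mat_act M ` std_lattice v"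
    using assms(3) std_lattice_basis by blast+
  then have "mat_act (minv M) (mat_act (smat c) (1,0)) \<in> std_lattice v"
    "mat_act (minv M) (mat_act (smat c) (0,1)) \<in> std_lattice v"
    using pullback by blast+
  then have mul: "vint v (e*c)" "vint v (d*c)" "vint v (b*c)" "vint v (a*c)"
    by (auto simp: M minv_def smat_def mat_act_def std_lattice_def dest: vint_uminus[OF v])
  have "vint v m" if "vint v (m/c)" "vint v (m*c)" for m
    using vint_mult[OF v that] assms(2) vint_square_imp[OF v, of m] by simp
  then show ?thesis
    using div mul by (simp add: M integral_mat_def)
qed

lemma vert_act_hclass_iff:
  assumes "mdet A = 1" "mdet (basis_mat e1 e2) \<noteq> 0"
  shows "vert_act A (hclass (lattice_of v e1 e2)) = hclass (lattice_of v e1 e2)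
    \<longleftrightarrow> integral_mat v (coord A (basis_mat e1 e2))"
proof -
  let ?E = "basis_mat e1 e2" and ?L = "lattice_of v e1 e2"
  let ?M = "coord A ?E"
  have L: "?L = mat_act ?E ` std_lattice v"
    by (rule lattice_of_eq_image)
  have M: "mdet ?M = 1"
    using assms by (simp add: mdet_coord)
  have AL: "mat_act A ` ?L = mat_act ?E ` mat_act ?M ` std_lattice v"
    using coord_intertwine[OF assms(2)] by (simp add: L image_mat_act_mmul)
  have scale: "mat_act (smat c) ` ?L = mat_act ?E ` mat_act (smat c) ` std_lattice v" for c
    by (simp add: L image_mat_act_mmul smat_commute)
  have E_inj: "mat_act ?E ` S = mat_act ?E ` T \<longleftrightarrow> S = T" for S T
  proof
    assume "mat_act ?E ` S = mat_act ?E ` T"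
    then have "mat_act (ginv ?E) ` mat_act ?E ` S = mat_act (ginv ?E) ` mat_act ?E ` T"
      by simp
    then show "S = T"
      using ginv_left[OF assms(2)] by (simp add: image_mat_act_mmul)
  qed simp
  show ?thesis
  proof
    assume fixed: "vert_act A (hclass ?L) = hclass ?L"
    from mem_hclass_self have "mat_act A ` ?L \<in> hclass ?L"
      using fixed unfolding vert_act_def by (metis imageI)
    then obtain c where "c \<noteq> 0" "mat_act A ` ?L = mat_act (smat c) ` ?L"
      by (auto simp: hclass_eq_image)
    then show "integral_mat v ?M"
      using integral_if_homothetic[OF M] AL scale E_inj by metis
  next
    assume "integral_mat v ?M"
    then have "mat_act A ` ?L = ?L"
      using mat_act_std_lattice_iff[OF M] AL L by simp
    then have "mat_act A ` mat_act (smat c) ` ?L = mat_act (smat c) ` ?L" for c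
      by (metis image_mat_act_mmul smat_commute)
    then show "vert_act A (hclass ?L) = hclass ?L"
      unfolding vert_act_def hclass_eq_image image_image by simp
  qed
qed

lemma integral_mat_coord_mneg:
  assumes "mdet E \<noteq> 0" "integral_mat v (coord A E)"
  shows "integral_mat v (coord (mneg A) E)"
  using integral_mat_mlin[OF assms(2), of 0 "-1"] vint_uminus[OF v vint_1[OF v]] vint_0[OF v]
  by (simp add: mneg_eq_mlin coord_mlin[OF assms(1)])

lemma Fix_pcls_iff:
  assumes "mdet A = 1"
  shows "X \<in> Fix v (pcls A) \<longleftrightarrow> X \<in> BT_vertices v \<and>
    (\<forall>e1 e2. mdet (basis_mat e1 e2) \<noteq> 0 \<longrightarrow> X = hclass (lattice_of v e1 e2)
      \<longrightarrow> integral_mat v (coord A (basis_mat e1 e2)))"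
    (is "_ \<longleftrightarrow> _ \<and> ?integral")
proof
  assume "X \<in> Fix v (pcls A)"
  then have "X \<in> BT_vertices v" "vert_act A X = X"
    by (auto simp: Fix_def pcls_def)
  then show "X \<in> BT_vertices v \<and> ?integral"
    using vert_act_hclass_iff[OF assms] by blast
next
  assume X: "X \<in> BT_vertices v \<and> ?integral"
  then obtain e1 e2 where E: "mdet (basis_mat e1 e2) \<noteq> 0" "X = hclass (lattice_of v e1 e2)"
    by (blast elim: BT_vertices_E)
  then have "integral_mat v (coord A (basis_mat e1 e2))"
    using X by blast
  then have "vert_act A X = X" "vert_act (mneg A) X = X"
    using vert_act_hclass_iff[OF assms E(1)] vert_act_hclass_iff[of "mneg A", OF _ E(1)]
      integral_mat_coord_mneg[OF E(1)] assms E(2) by simp_all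
  then show "X \<in> Fix v (pcls A)"
    using X by (auto simp: Fix_def pcls_def)
qed

lemma Fix_pone:
  assumes "X \<in> BT_vertices v"
  shows "X \<in> Fix v pone"
proof -
  have "integral_mat v mid"
    using vint_0[OF v] vint_1[OF v] by (simp add: integral_mat_def mid_def)
  then show ?thesis
    using assms by (simp add: pone_def Fix_pcls_iff[OF mdet_mid] coord_mid)
qed

text \<open>If \<open>B = x I + y A\<close> with \<open>y\<close> integral, the determinant forces \<open>x\<close> to be integral too
  (\<open>tr A\<close> is integral since \<open>A\<close> fixes a vertex), so \<open>B\<close> preserves every lattice \<open>A\<close> preserves.\<close>

lemma Fix_subset_mlin:
  assumes "mdet A = 1" "mdet B = 1" "B = mlin x y A" "vint v y" "Fix v (pcls A) \<noteq> {}"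
  shows "Fix v (pcls A) \<subseteq> Fix v (pcls B)"
proof -
  obtain X0 e1 e2 where "X0 \<in> Fix v (pcls A)" "mdet (basis_mat e1 e2) \<noteq> 0" "X0 = hclass (lattice_of v e1 e2)"
    using assms(5) Fix_pcls_iff[OF assms(1)] by (metis all_not_in_conv BT_vertices_E)
  then have "vint v (mtr A)"
    using Fix_pcls_iff[OF assms(1)] integral_mat_mtr mtr_coord by metis
  moreover have "x*x + x*y*mtr A + y*y = 1"
    using assms(1-3) by (simp add: mdet_mlin)
  ultimately have "vint v x"
    using vint_quadratic_root[OF v assms(4)] by blast
  show ?thesis
  proof
    fix X assume "X \<in> Fix v (pcls A)"
    then show "X \<in> Fix v (pcls B)"
      unfolding Fix_pcls_iff[OF assms(2)] Fix_pcls_iff[OF assms(1)]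
      using integral_mat_mlin[OF _ \<open>vint v x\<close> assms(4)] by (auto simp: assms(3) coord_mlin)
  qed
qed

lemma Fix_nested_if_in_span:
  assumes "mdet A = 1" "mdet B = 1" "in_span A B" "Fix v (pcls A) \<noteq> {}" "Fix v (pcls B) \<noteq> {}"
  shows "Fix v (pcls A) \<subseteq> Fix v (pcls B) \<or> Fix v (pcls B) \<subseteq> Fix v (pcls A)"
proof -
  obtain x y where B: "B = mlin x y A"
    using assms(3) by (auto simp: in_span_def)
  show ?thesis
  proof (cases "vint v y")
    case True
    then show ?thesis
      using Fix_subset_mlin[OF assms(1,2) B _ assms(4)] by blast
  next
    case False
    then have "y \<noteq> 0" "vint v (1/y)"
      using v_inverse[OF v, of y] by (auto simp: vint_def divide_inverse)
    moreover have "A = mlin (-x/y) (1/y) B"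
      using \<open>y \<noteq> 0\<close> by (cases A) (simp add: B mlin_def field_simps)
    ultimately show ?thesis
      using Fix_subset_mlin[OF assms(2,1) _ _ assms(5)] by blast
  qed
qed

end

section \<open>Stabilisers of vertices\<close>

definition stabiliser :: "('a::field \<Rightarrow> int) \<Rightarrow> 'a psl2 set \<Rightarrow> ('a \<times> 'a) set set \<Rightarrow> 'a psl2 monoid" where
  "stabiliser v G X = \<lparr>carrier = {g \<in> G. X \<in> Fix v g}, monoid.mult = pmul, one = pone\<rparr>"

lemma stabiliser_simps:
  "carrier (stabiliser v G X) = {g \<in> G. X \<in> Fix v g}"
  "monoid.mult (stabiliser v G X) = pmul" "one (stabiliser v G X) = pone"
  by (simp_all add: stabiliser_def)

lemma stabiliser_group:
  assumes "nonarch_local_field v" "subgroup_PSL2 G" "X \<in> BT_vertices v"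
  shows "group (stabiliser v G X)"
proof (rule groupI)
  have PSL2: "x \<in> PSL2" if "x \<in> G" for x
    using assms(2) that by (auto simp: subgroup_PSL2_def)
  fix x y z assume x: "x \<in> carrier (stabiliser v G X)" and y: "y \<in> carrier (stabiliser v G X)"
    and z: "z \<in> carrier (stabiliser v G X)"
  show "x \<otimes>\<^bsub>stabiliser v G X\<^esub> y \<in> carrier (stabiliser v G X)"
    using x y assms(2) by (simp add: stabiliser_simps Fix_pmul subgroup_PSL2_def)
  show "x \<otimes>\<^bsub>stabiliser v G X\<^esub> y \<otimes>\<^bsub>stabiliser v G X\<^esub> z
      = x \<otimes>\<^bsub>stabiliser v G X\<^esub> (y \<otimes>\<^bsub>stabiliser v G X\<^esub> z)"
    using x y z PSL2 by (simp add: stabiliser_simps pmul_assoc)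
next
  have PSL2: "x \<in> PSL2" if "x \<in> G" for x
    using assms(2) that by (auto simp: subgroup_PSL2_def)
  show "\<one>\<^bsub>stabiliser v G X\<^esub> \<in> carrier (stabiliser v G X)"
    using assms Fix_pone by (simp add: stabiliser_simps subgroup_PSL2_def)
  fix x assume x: "x \<in> carrier (stabiliser v G X)"
  show "\<one>\<^bsub>stabiliser v G X\<^esub> \<otimes>\<^bsub>stabiliser v G X\<^esub> x = x"
    using x PSL2 by (simp add: stabiliser_simps pmul_pone)
  have "x \<in> G" "X \<in> Fix v x"
    using x by (simp_all add: stabiliser_simps)
  then have "pinv x \<in> carrier (stabiliser v G X)" "pmul (pinv x) x = pone"
    using PSL2 assms(2) Fix_pinv[OF PSL2] by (simp_all add: stabiliser_simps subgroup_PSL2_def pmul_pinv)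
  then show "\<exists>y\<in>carrier (stabiliser v G X). y \<otimes>\<^bsub>stabiliser v G X\<^esub> x = \<one>\<^bsub>stabiliser v G X\<^esub>"
    by (auto simp: stabiliser_simps)
qed

lemma stabiliser_pow: "x = pcls A \<Longrightarrow> x [^]\<^bsub>stabiliser v G X\<^esub> (n::nat) = pcls (mpow A n)"
  by (induction n) (simp_all add: stabiliser_simps pone_def pmul_pcls mpow_commute)

definition msmall :: "('a::field \<Rightarrow> int) \<Rightarrow> int \<Rightarrow> 'a mat2 \<Rightarrow> bool" where
  "msmall v n = (\<lambda>(a,b,c,d). vsmall v n a \<and> vsmall v n b \<and> vsmall v n c \<and> vsmall v n d)"

definition msub :: "'a::field mat2 \<Rightarrow> 'a mat2 \<Rightarrow> 'a mat2" where
  "msub = (\<lambda>(a,b,c,d) (e,f,g,h). (a-e, b-f, c-g, d-h))"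

lemma mmul_msub_left: "mmul P (msub Q R) = msub (mmul P Q) (mmul P R)"
  by (cases P; cases Q; cases R) (simp add: mmul_def msub_def algebra_simps)

lemma mmul_msub_right: "mmul (msub Q R) P = msub (mmul Q P) (mmul R P)"
  by (cases P; cases Q; cases R) (simp add: mmul_def msub_def algebra_simps)

lemma msub_msub_cancel: "msub (msub B R) (msub A R) = msub B A"
  by (cases A; cases B; cases R) (simp add: msub_def)

lemma near_id_iff_msmall: "near_id v N Z \<longleftrightarrow> msmall v N (msub Z mid)"
  by (cases Z) (simp add: near_id_def msmall_def msub_def mid_def)

lemma discrete_subgroup_near_id:
  assumes "discrete_subgroup v G"
  obtains N where "\<And>A B. pcls A \<in> G \<Longrightarrow> pcls B \<in> G \<Longrightarrow> mdet A = 1 \<Longrightarrow>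
    near_id v N (mmul (minv A) B) \<Longrightarrow> pcls A = pcls B"
proof -
  obtain N where N: "\<forall>X\<in>G. (\<exists>A\<in>X. near_id v N A) \<longrightarrow> X = pone"
    using assms by (auto simp: discrete_subgroup_def)
  have "pcls A = pcls B"
    if "pcls A \<in> G" "pcls B \<in> G" "mdet A = 1" "near_id v N (mmul (minv A) B)" for A B
  proof -
    have "pmul (pinv (pcls A)) (pcls B) \<in> G"
      using that(1,2) assms by (simp add: discrete_subgroup_def subgroup_PSL2_def)
    then have "pcls (mmul (minv A) B) \<in> G"
      by (simp add: pinv_pcls pmul_pcls)
    moreover have "mmul (minv A) B \<in> pcls (mmul (minv A) B)"
      by (simp add: pcls_def)
    ultimately have "pcls (mmul (minv A) B) = pone"
      using N that(4) by blast
    then have "mmul (minv A) B = mid \<or> mmul (minv A) B = mneg mid"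
      by (simp add: pcls_eq_pone_iff)
    moreover have "B = mmul A (mmul (minv A) B)"
      using that(3) by (simp add: minv_right flip: mmul_assoc)
    ultimately have "B = A \<or> B = mneg A"
      by (auto simp: mmul_mneg)
    then show ?thesis
      by auto
  qed
  then show ?thesis
    using that by blast
qed

context
  fixes v :: "'a::field_char_0 \<Rightarrow> int"
  assumes v: "nonarch_local_field v"
begin

lemma msmall_mmul: "msmall v n P \<Longrightarrow> msmall v m Q \<Longrightarrow> msmall v (n+m) (mmul P Q)"
  by (cases P; cases Q) (simp add: msmall_def mmul_def vsmall_add[OF v] vsmall_mult[OF v])

lemma msmall_msub: "msmall v n P \<Longrightarrow> msmall v n Q \<Longrightarrow> msmall v n (msub P Q)"
  by (cases P; cases Q) (simp add: msmall_def msub_def vsmall_diff[OF v])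

lemma msmall_mono: "msmall v n P \<Longrightarrow> m \<le> n \<Longrightarrow> msmall v m P"
  by (cases P) (auto simp: msmall_def intro: vsmall_mono[OF v])

lemma integral_mat_iff_msmall: "integral_mat v M \<longleftrightarrow> msmall v 0 M"
  by (cases M) (simp add: integral_mat_def msmall_def vint_iff_vsmall[OF v])

lemma msmall_exists: "\<exists>n. msmall v n M"
proof -
  obtain a b c d where M: "M = (a,b,c,d)" by (cases M)
  obtain na nb nc nd where "vsmall v na a" "vsmall v nb b" "vsmall v nc c" "vsmall v nd d"
    using vsmall_exists[OF v] by metis
  then have "msmall v (min (min na nb) (min nc nd)) M"
    by (simp add: M msmall_def) (meson min.cobounded1 min.cobounded2 order_trans vsmall_mono[OF v])
  then show ?thesis by blast
qed

lemma integral_mat_net: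
  "\<exists>S. finite S \<and> (\<forall>M. integral_mat v M \<longrightarrow> (\<exists>R\<in>S. msmall v (int N) (msub M R)))"
proof -
  obtain T where T: "finite T" "\<forall>x. vint v x \<longrightarrow> (\<exists>t\<in>T. vsmall v (int N) (x - t))"
    using finite_residue_system[OF v] by blast
  have "\<exists>R\<in>T \<times> T \<times> T \<times> T. msmall v (int N) (msub M R)" if "integral_mat v M" for M
  proof -
    obtain a b c d where M: "M = (a,b,c,d)" by (cases M)
    then have "vint v a" "vint v b" "vint v c" "vint v d"
      using that by (simp_all add: integral_mat_def)
    then obtain ta tb tc td where "ta \<in> T" "tb \<in> T" "tc \<in> T" "td \<in> T"
      "vsmall v (int N) (a - ta)" "vsmall v (int N) (b - tb)"
      "vsmall v (int N) (c - tc)" "vsmall v (int N) (d - td)"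
      using T(2) by meson
    then show ?thesis
      by (intro bexI[of _ "(ta,tb,tc,td)"]) (simp_all add: M msmall_def msub_def)
  qed
  then show ?thesis
    using T(1) by (intro exI[of _ "T \<times> T \<times> T \<times> T"] conjI) simp_all
qed

text \<open>Closeness of \<open>E\<^sup>-\<^sup>1AE\<close> and \<open>E\<^sup>-\<^sup>1BE\<close> forces \<open>A\<^sup>-\<^sup>1B\<close> close to the identity; the loss
  of precision depends only on the valuations of the entries of \<open>E\<close> and \<open>E\<^sup>-\<^sup>1\<close>.\<close>

lemma coord_close_imp_near_id:
  assumes E: "mdet E \<noteq> 0" "msmall v K1 E" "msmall v K2 (ginv E)"
    and "mdet A = 1" "integral_mat v (coord A E)"
    and "msmall v N (msub (coord B E) (coord A E))"
  shows "msmall v (K1 + N + K2) (msub (mmul (minv A) B) mid)"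
proof -
  let ?C = "coord (mmul (minv A) B) E"
  have "mdet (coord A E) = 1"
    using E(1) assms(4) by (simp add: mdet_coord)
  then have "msub ?C mid = mmul (minv (coord A E)) (msub (coord B E) (coord A E))"
    using E(1) assms(4) by (simp add: coord_mmul coord_minv mmul_msub_left minv_left)
  moreover have "msmall v (0 + N) (mmul (minv (coord A E)) (msub (coord B E) (coord A E)))"
    using integral_mat_minv[OF v assms(5)] assms(6)
    by (intro msmall_mmul) (simp_all add: integral_mat_iff_msmall)
  ultimately have "msmall v N (msub ?C mid)"
    by simp
  moreover have "msub (mmul (minv A) B) mid = mmul E (mmul (msub ?C mid) (ginv E))"
    using E(1) by (simp add: mmul_msub_left mmul_msub_right coord_inverse ginv_right)
  ultimately show ?thesis
    using msmall_mmul[OF E(2) msmall_mmul[OF _ E(3)]] by (simp add: add.assoc)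
qed


lemma integral_mat_coord_lift:
  assumes "x \<in> PSL2" "hclass (lattice_of v e1 e2) \<in> Fix v x" "mdet (basis_mat e1 e2) \<noteq> 0"
  shows "integral_mat v (coord (lift x) (basis_mat e1 e2))"
  using assms lift_PSL2[OF assms(1)] Fix_pcls_iff[OF v, of "lift x"] by metis

lemma eq_if_coord_close:
  assumes "discrete_subgroup v G" "mdet E \<noteq> 0"
  obtains N where "\<And>x y. x \<in> G \<Longrightarrow> y \<in> G \<Longrightarrow> integral_mat v (coord (lift x) E) \<Longrightarrow>
    msmall v (int N) (msub (coord (lift y) E) (coord (lift x) E)) \<Longrightarrow> x = y"
proof -
  obtain N0 where N0: "\<And>A B. pcls A \<in> G \<Longrightarrow> pcls B \<in> G \<Longrightarrow> mdet A = 1 \<Longrightarrow>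
      near_id v N0 (mmul (minv A) B) \<Longrightarrow> pcls A = pcls B"
    using discrete_subgroup_near_id[OF assms(1)] by blast
  obtain K1 K2 where K: "msmall v K1 E" "msmall v K2 (ginv E)"
    using msmall_exists by metis
  define N where "N = nat (N0 - K1 - K2)"
  have "x = y" if "x \<in> G" "y \<in> G" "integral_mat v (coord (lift x) E)"
    "msmall v (int N) (msub (coord (lift y) E) (coord (lift x) E))" for x y
  proof -
    have "x \<in> PSL2" "y \<in> PSL2"
      using assms(1) that(1,2) by (auto simp: discrete_subgroup_def subgroup_PSL2_def)
    then have lifts: "mdet (lift x) = 1" "x = pcls (lift x)" "y = pcls (lift y)"
      using lift_PSL2 by blast+
    then have "msmall v (K1 + int N + K2) (msub (mmul (minv (lift x)) (lift y)) mid)"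
      using coord_close_imp_near_id[OF assms(2) K _ that(3,4)] by blast
    then have "near_id v N0 (mmul (minv (lift x)) (lift y))"
      unfolding near_id_iff_msmall by (rule msmall_mono) (simp add: N_def)
    then show "x = y"
      using N0[of "lift x" "lift y"] lifts that(1,2) by simp
  qed
  then show ?thesis
    using that by blast
qed

text \<open>Elements of the stabiliser are determined by the residues of the entries of
  \<open>E\<^sup>-\<^sup>1 A E\<close> modulo a fixed power of \<open>\<pi>\<close>, of which there are finitely many.\<close>

lemma finite_stabiliser:
  assumes "discrete_subgroup v G" "X \<in> BT_vertices v"
  shows "finite (carrier (stabiliser v G X))"
proof -
  let ?H = "carrier (stabiliser v G X)"
  obtain e1 e2 where E: "mdet (basis_mat e1 e2) \<noteq> 0" "X = hclass (lattice_of v e1 e2)"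
    using assms(2) by (rule BT_vertices_E)
  define E where "E = basis_mat e1 e2"
  obtain N where N: "\<And>x y. x \<in> G \<Longrightarrow> y \<in> G \<Longrightarrow> integral_mat v (coord (lift x) E) \<Longrightarrow>
      msmall v (int N) (msub (coord (lift y) E) (coord (lift x) E)) \<Longrightarrow> x = y"
    using eq_if_coord_close[OF assms(1)] E(1) by (metis E_def)
  obtain S where S: "finite S" "\<And>M. integral_mat v M \<Longrightarrow> \<exists>R\<in>S. msmall v (int N) (msub M R)"
    using integral_mat_net[of N] by blast
  have int: "integral_mat v (coord (lift x) E)" if "x \<in> ?H" for x
    using integral_mat_coord_lift[of x e1 e2] that assms(1) E
    by (auto simp: stabiliser_def E_def discrete_subgroup_def subgroup_PSL2_def)
  define f where "f x = (SOME R. R \<in> S \<and> msmall v (int N) (msub (coord (lift x) E) R))" for x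
  have f: "f x \<in> S \<and> msmall v (int N) (msub (coord (lift x) E) (f x))" if "x \<in> ?H" for x
    unfolding f_def by (rule someI_ex) (use S(2) int[OF that] in blast)
  have "inj_on f ?H"
  proof (rule inj_onI)
    fix x y assume x: "x \<in> ?H" and y: "y \<in> ?H" and "f x = f y"
    then have "msmall v (int N) (msub (coord (lift y) E) (coord (lift x) E))"
      using f[OF x] f[OF y] msmall_msub msub_msub_cancel by metis
    then show "x = y"
      using N int[OF x] x y by (simp add: stabiliser_simps)
  qed
  moreover have "f ` ?H \<subseteq> S"
    using f by blast
  ultimately show ?thesis
    using S(1) finite_imageD finite_subset by blast
qed

end

section \<open>Finite subgroups of \<open>PSL\<^sub>2\<close> without 2-torsion are abelian\<close>

context
  fixes G :: "'a::field_char_0 psl2 set"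
  assumes G: "subgroup_PSL2 G" and no_2_torsion: "no_2_torsion G"
begin

lemma trace_nonzero: "pcls A \<in> G \<Longrightarrow> mdet A = 1 \<Longrightarrow> pcls A \<noteq> pone \<Longrightarrow> mtr A \<noteq> 0"
  using no_2_torsion pcls_trace_zero_involution[of A] unfolding no_2_torsion_def by blast

lemma commute_lift:
  assumes "pcls X \<in> G" "mdet X = 1" "pcls X \<noteq> pone" "mdet Y = 1"
    and "pmul (pcls X) (pcls Y) = pmul (pcls Y) (pcls X)"
  shows "mmul X Y = mmul Y X"
  using pcls_commute_lift[OF assms(5,4)] trace_nonzero[OF assms(1-3)] .

text \<open>The centraliser of a non-scalar matrix is the commutative algebra it generates.\<close>

lemma commute_trans:
  assumes "x \<in> G" "y \<in> G" "z \<in> G" "y \<noteq> pone"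
    and "pmul x y = pmul y x" "pmul y z = pmul z y"
  shows "pmul x z = pmul z x"
proof -
  obtain X where X: "mdet X = 1" "x = pcls X"
    using G assms(1) by (rule subgroup_PSL2_E)
  obtain Y where Y: "mdet Y = 1" "y = pcls Y"
    using G assms(2) by (rule subgroup_PSL2_E)
  obtain Z where Z: "mdet Z = 1" "z = pcls Z"
    using G assms(3) by (rule subgroup_PSL2_E)
  have "nonscalar Y"
    using pcls_nonscalar Y assms(4) by blast
  moreover have "mmul Y X = mmul X Y" "mmul Y Z = mmul Z Y"
    using commute_lift[of Y] assms X Y Z by auto
  ultimately have "in_span Y X" "in_span Y Z"
    using commute_in_span by blast+
  then have "mmul X Z = mmul Z X"
    by (rule in_span_commute)
  then show ?thesis
    by (simp add: X(2) Z(2) pmul_pcls)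
qed

text \<open>An element of finite order is not \<open>\<plusminus>\<close> a unipotent, so a conjugator moving it
  into its centraliser commutes with it or has trace 0, i.e. is an involution.\<close>

lemma commute_conj:
  assumes "pcls X \<in> G" "mdet X = 1" "pcls X \<noteq> pone" "n \<ge> 1" "pcls (mpow X n) = pone"
    and "pcls H \<in> G" "mdet H = 1"
    and "pmul (pcls (mmul H (mmul X (minv H)))) (pcls X) = pmul (pcls X) (pcls (mmul H (mmul X (minv H))))"
  shows "pmul (pcls H) (pcls X) = pmul (pcls X) (pcls H)"
proof -
  have "nonscalar X"
    using pcls_nonscalar assms(2,3) by blast
  moreover have "mtr X * mtr X \<noteq> 4"
    using torsion_nonscalar_trace_sq_ne_4[OF \<open>nonscalar X\<close> assms(2,4)] assms(5)
    by (simp add: pcls_eq_pone_iff)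
  moreover have "mdet (mmul H (mmul X (minv H))) = 1"
    using assms(2,7) by (simp add: mdet_mmul)
  then have "mmul (mmul H (mmul X (minv H))) X = mmul X (mmul H (mmul X (minv H)))"
    using commute_lift[OF assms(1-3) _ assms(8)[symmetric]] by simp
  ultimately have "mmul H X = mmul X H \<or> mtr H = 0"
    using conj_commute_imp_commute_or_trace_zero assms(2,7) by blast
  then show ?thesis
  proof
    assume "mtr H = 0"
    then have "pcls H = pone"
      using trace_nonzero assms(6,7) by blast
    then show ?thesis
      by (simp add: pone_def pmul_pcls)
  qed (simp add: pmul_pcls)
qed

end

context
  fixes v :: "'a::field_char_0 \<Rightarrow> int" and G :: "'a psl2 set" and X :: "('a \<times> 'a) set set"
  assumes v: "nonarch_local_field v" and discrete: "discrete_subgroup v G"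
    and no_2_torsion: "no_2_torsion G" and X: "X \<in> BT_vertices v"
begin

lemma G_subgroup: "subgroup_PSL2 G"
  using discrete by (simp add: discrete_subgroup_def)

interpretation Stab: group "stabiliser v G X"
  by (rule stabiliser_group[OF v G_subgroup X])

lemma stabiliser_mem: "x \<in> carrier (stabiliser v G X) \<Longrightarrow> x \<in> G"
  by (simp add: stabiliser_simps)

lemma stabiliser_commute_trans:
  assumes "x \<in> carrier (stabiliser v G X)" "y \<in> carrier (stabiliser v G X)"
    "z \<in> carrier (stabiliser v G X)" "y \<noteq> \<one>\<^bsub>stabiliser v G X\<^esub>"
    "x \<otimes>\<^bsub>stabiliser v G X\<^esub> y = y \<otimes>\<^bsub>stabiliser v G X\<^esub> x"
    "y \<otimes>\<^bsub>stabiliser v G X\<^esub> z = z \<otimes>\<^bsub>stabiliser v G X\<^esub> y"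
  shows "x \<otimes>\<^bsub>stabiliser v G X\<^esub> z = z \<otimes>\<^bsub>stabiliser v G X\<^esub> x"
proof -
  have "pmul x z = pmul z x"
    by (rule commute_trans[OF G_subgroup no_2_torsion stabiliser_mem[OF assms(1)]
          stabiliser_mem[OF assms(2)] stabiliser_mem[OF assms(3)]])
      (use assms(4-6) in \<open>simp_all add: stabiliser_simps\<close>)
  then show ?thesis
    by (simp add: stabiliser_simps)
qed

lemma stabiliser_conjg:
  assumes "h \<in> carrier (stabiliser v G X)" "h = pcls H" "mdet H = 1"
  shows "Stab.conjg h (pcls A) = pcls (mmul H (mmul A (minv H)))"
proof -
  have "h \<in> PSL2" "pinv h \<in> G" "X \<in> Fix v h"
    using G_subgroup assms(1) by (auto simp: subgroup_PSL2_def stabiliser_simps)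
  then have "inv\<^bsub>stabiliser v G X\<^esub> h = pinv h"
    using assms(1) by (intro Stab.inv_equality) (simp_all add: stabiliser_simps Fix_pinv pmul_pinv)
  then show ?thesis
    by (simp add: Stab.conjg_def stabiliser_simps assms(2) pinv_pcls pmul_pcls mmul_assoc)
qed

lemma stabiliser_commute_conjg:
  assumes x: "x \<in> carrier (stabiliser v G X)" "x \<noteq> \<one>\<^bsub>stabiliser v G X\<^esub>"
    and h: "h \<in> carrier (stabiliser v G X)"
    and "Stab.conjg h x \<otimes>\<^bsub>stabiliser v G X\<^esub> x = x \<otimes>\<^bsub>stabiliser v G X\<^esub> Stab.conjg h x"
  shows "h \<otimes>\<^bsub>stabiliser v G X\<^esub> x = x \<otimes>\<^bsub>stabiliser v G X\<^esub> h"
proof -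
  obtain A where A: "mdet A = 1" "x = pcls A"
    using subgroup_PSL2_E[OF G_subgroup stabiliser_mem[OF x(1)]] by blast
  obtain H where H: "mdet H = 1" "h = pcls H"
    using subgroup_PSL2_E[OF G_subgroup stabiliser_mem[OF h]] by blast
  obtain n :: nat where n: "n \<ge> 1" "x [^]\<^bsub>stabiliser v G X\<^esub> n = \<one>\<^bsub>stabiliser v G X\<^esub>"
    using Stab.finite_pow_eq_one[OF finite_stabiliser[OF v discrete X] x(1)] by blast
  have "pmul (pcls (mmul H (mmul A (minv H)))) (pcls A) = pmul (pcls A) (pcls (mmul H (mmul A (minv H))))"
    using assms(4) stabiliser_conjg[OF h H(2,1), of A] A(2) by (simp add: stabiliser_simps)
  moreover have "pcls A \<in> G" "pcls A \<noteq> pone" "pcls H \<in> G"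
    using stabiliser_mem x h A H by (simp_all add: stabiliser_simps)
  moreover have "pcls (mpow A n) = pone"
    using n(2) stabiliser_pow[OF A(2), of v G X n] by (simp add: stabiliser_simps)
  ultimately have "pmul (pcls H) (pcls A) = pmul (pcls A) (pcls H)"
    using commute_conj[OF G_subgroup no_2_torsion _ A(1) _ n(1) _ _ H(1)] by blast
  then show ?thesis
    by (simp add: stabiliser_simps A H)
qed

lemma stabiliser_commute:
  assumes "x \<in> carrier (stabiliser v G X)" "y \<in> carrier (stabiliser v G X)"
  shows "pmul x y = pmul y x"
  using Stab.finite_group_commute[OF finite_stabiliser[OF v discrete X]
      stabiliser_commute_trans stabiliser_commute_conjg assms]
  by (simp add: stabiliser_simps)


text \<open>The key step: nontrivial powers of \<open>g\<close> and \<open>h\<close> fixing a common vertex lie in its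
  finite, hence abelian, stabiliser; so they commute, and their lifts generate the same
  algebra as the lifts of \<open>g\<close> and \<open>h\<close>.\<close>

lemma in_span_if_powers_fix_vertex:
  assumes "pcls A \<in> G" "pcls B \<in> G" "mdet A = 1" "mdet B = 1"
    and "X \<in> Fix v (pzpow (pcls A) i)" "pzpow (pcls A) i \<noteq> pone"
    and "X \<in> Fix v (pzpow (pcls B) j)" "pzpow (pcls B) j \<noteq> pone"
  shows "in_span A B"
proof -
  note G = G_subgroup
  have Ai: "pcls (mzpow A i) \<in> carrier (stabiliser v G X)" "pcls (mzpow A i) \<noteq> pone"
    using pzpow_mem[OF G assms(1)] assms(5,6) by (simp_all add: stabiliser_simps pzpow_pcls)
  have Bj: "pcls (mzpow B j) \<in> carrier (stabiliser v G X)" "pcls (mzpow B j) \<noteq> pone"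
    using pzpow_mem[OF G assms(2)] assms(7,8) by (simp_all add: stabiliser_simps pzpow_pcls)
  have "mmul (mzpow A i) (mzpow B j) = mmul (mzpow B j) (mzpow A i)"
    using commute_lift[OF G no_2_torsion _ mzpow_mdet[OF assms(3)] Ai(2) mzpow_mdet[OF assms(4)]]
      stabiliser_commute[OF Ai(1) Bj(1)] Ai(1) by (simp add: stabiliser_simps)
  moreover have "nonscalar (mzpow A i)" "nonscalar (mzpow B j)"
    using pcls_nonscalar mzpow_mdet assms(3,4) Ai(2) Bj(2) by blast+
  ultimately show ?thesis
    using in_span_of_commuting_powers by blast
qed

end

theorem lemma2p6:
  fixes v :: "'a::field_char_0 \<Rightarrow> int" and G :: "'a psl2 set" and g h :: "'a psl2"
  assumes "nonarch_local_field v"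
    and "discrete_subgroup v G"
    and "no_2_torsion G"
    and "g \<in> G" and "h \<in> G"
    and "elliptic v g" and "elliptic v h"
  shows "Fall v g \<inter> Fall v h = {} \<or> Fix v g \<subseteq> Fix v h \<or> Fix v h \<subseteq> Fix v g"
proof (cases "Fall v g \<inter> Fall v h = {}")
  case False
  then obtain X i j where X: "X \<in> Fix v (pzpow g i)" "pzpow g i \<noteq> pone"
    "X \<in> Fix v (pzpow h j)" "pzpow h j \<noteq> pone"
    by (auto simp: Fall_def)
  then have "X \<in> BT_vertices v"
    by (simp add: Fix_def)
  obtain A B where A: "mdet A = 1" "g = pcls A" and B: "mdet B = 1" "h = pcls B"
    using subgroup_PSL2_E assms(2,4,5) by (metis discrete_subgroup_def)
  have "in_span A B"
    by (rule in_span_if_powers_fix_vertex[OF assms(1-3) \<open>X \<in> BT_vertices v\<close>])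
      (use assms(4,5) X A B in simp_all)
  then show ?thesis
    using Fix_nested_if_in_span[OF assms(1) A(1) B(1)] assms(6,7) A(2) B(2)
    by (simp add: elliptic_def)
qed simp

end
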